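(* Let $K$ be a Cantor set, let $T:K\to K$ be a homeomorphism, and let $K_1,\dots,K_N$ be pairwise disjoint Cantor sets with $K=\bigcup_{i=1}^N K_i$. Then there exists a homeomorphism $\widetilde T:K\to K$ such that for every $x\in K$ and every $1\le i\le N$, $\widetilde T(x)\in K_i$ if and only if $T(x)\in K_i$, and for every $x\in K$ the $\omega$-limit set of $x$ under $\widetilde T$ is a periodic orbit.
   Context: A Cantor set is a nonempty totally disconnected, perfect, compact metric space. *)

theory Defs
  imports "HOL-Analysis.Analysis"
begin

definition cantor_set :: "'a::metric_space set \<Rightarrow> bool" where
  "cantor_set S \<longleftrightarrow> S \<noteq> {} \<and> compact S \<and> (\<forall>x\<in>S. x islimpt S)
     \<and> (\<forall>C. C \<subseteq> S \<and> connected C \<longrightarrow> (\<exists>a. C \<subseteq> {a}))"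

definition omega_limit_set :: "('a::metric_space \<Rightarrow> 'a) \<Rightarrow> 'a \<Rightarrow> 'a set" where
  "omega_limit_set f x = {y. \<forall>e>0. \<forall>M. \<exists>n\<ge>M. dist ((f ^^ n) x) y < e}"

definition periodic_orbit :: "('a \<Rightarrow> 'a) \<Rightarrow> 'a set \<Rightarrow> bool" where
  "periodic_orbit f A \<longleftrightarrow> (\<exists>p k. k > 0 \<and> (f ^^ k) p = p \<and> A = {(f ^^ n) p | n. True})"

end

theory Submission
  imports Defs "HOL-Library.Countable" "HOL-Real_Asymp.Real_Asymp"
begin

section \<open>Clopen partitions of Cantor sets\<close>

definition totally_disconnected :: "'a::metric_space set \<Rightarrow> bool" where
  "totally_disconnected S \<longleftrightarrow> (\<forall>C. C \<subseteq> S \<and> connected C \<longrightarrow> (\<exists>a. C \<subseteq> {a}))"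

lemma cantor_set_iff:
  "cantor_set S \<longleftrightarrow> S \<noteq> {} \<and> compact S \<and> (\<forall>x\<in>S. x islimpt S) \<and> totally_disconnected S"
  unfolding cantor_set_def totally_disconnected_def by (rule refl)

lemma cantor_setD:
  assumes "cantor_set S"
  shows "S \<noteq> {}" "compact S" "\<And>x. x \<in> S \<Longrightarrow> x islimpt S" "totally_disconnected S"
  using assms unfolding cantor_set_iff by blast+

text \<open>For compact \<open>X\<close> these are exactly the subsets that are open and closed in \<open>X\<close>.\<close>
definition clopen_in :: "'a::metric_space set \<Rightarrow> 'a set \<Rightarrow> bool" where
  "clopen_in X U \<longleftrightarrow> U \<subseteq> X \<and> compact U \<and> compact (X - U)"

lemma clopen_in_trans:
  assumes "clopen_in X U" "clopen_in U W"
  shows "clopen_in X W"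
proof -
  have "X - W = (X - U) \<union> (U - W)"
    using assms by (auto simp: clopen_in_def)
  then show ?thesis
    using assms by (auto simp: clopen_in_def compact_Un)
qed

lemma clopen_in_Int: "clopen_in X U \<Longrightarrow> clopen_in X V \<Longrightarrow> clopen_in X (U \<inter> V)"
  unfolding clopen_in_def by (auto simp: Diff_Int compact_Un compact_Int)

lemma clopen_in_Un: "clopen_in X U \<Longrightarrow> clopen_in X V \<Longrightarrow> clopen_in X (U \<union> V)"
  unfolding clopen_in_def by (auto simp: Diff_Un compact_Un compact_Int)

lemma clopen_in_Diff:
  assumes "clopen_in X U" "clopen_in X V"
  shows "clopen_in X (U - V)"
proof -
  have "U - V = U \<inter> (X - V)" "X - (X - V) = V"
    using assms by (auto simp: clopen_in_def)
  then show ?thesis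
    using assms clopen_in_Int[of X U "X - V"] by (auto simp: clopen_in_def)
qed

lemma clopen_in_open:
  assumes "clopen_in X U"
  obtains G where "open G" "U = X \<inter> G"
proof
  show "open (- (X - U))"
    using assms unfolding clopen_in_def by (intro open_Compl compact_imp_closed) auto
  show "U = X \<inter> - (X - U)"
    using assms unfolding clopen_in_def by auto
qed

lemma clopen_in_separating:
  fixes X :: "'a::metric_space set"
  assumes X: "compact X" "totally_disconnected X"
    and x: "x \<in> X" and C: "compact C" "C \<subseteq> X" "x \<notin> C"
  obtains W where "clopen_in X W" "x \<in> W" "W \<inter> C = {}"
proof -
  have "separated_between (top_of_set X) {x} C"
  proof (rule cut_wire_fence_theorem)
    show "compact_space (top_of_set X)"
      using X by (simp add: compact_space_subtopology)
    show "closedin (top_of_set X) C"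
      using C by (simp add: closed_subset compact_imp_closed)
    fix D assume "connectedin (top_of_set X) D"
    then have "D \<subseteq> X" "connected D"
      by (auto simp: connectedin_subtopology)
    then obtain a where "D \<subseteq> {a}"
      using X(2) unfolding totally_disconnected_def by blast
    then show "disjnt D {x} \<or> disjnt D C"
      using C(3) by (auto simp: disjnt_def)
  qed (use x in \<open>auto simp: Hausdorff_space_subtopology closedin_subset_trans\<close>)
  then obtain U V where UV: "openin (top_of_set X) U" "openin (top_of_set X) V"
    "disjnt U V" "U \<union> V = X" "x \<in> U" "C \<subseteq> V"
    unfolding separated_between_def by auto
  then have "U = X - V" "V = X - U"
    by (auto simp: disjnt_def)
  then have "closedin (top_of_set X) U" "closedin (top_of_set X) V"
    using UV(1,2) by (metis closedin_diff closedin_topspace topspace_euclidean_subtopology)+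
  then have "clopen_in X U"
    using X(1) \<open>V = X - U\<close> openin_subset[OF UV(1)] by (auto simp: clopen_in_def closedin_compact)
  moreover have "U \<inter> C = {}"
    using UV(3,6) by (auto simp: disjnt_def)
  ultimately show ?thesis
    using UV(5) that by blast
qed

lemma cantor_set_clopen_in:
  assumes "cantor_set X" "clopen_in X U" "U \<noteq> {}"
  shows "cantor_set U"
proof -
  obtain G where G: "open G" "U = X \<inter> G"
    using clopen_in_open[OF assms(2)] .
  have "x islimpt U" if "x \<in> U" for x
  proof (rule islimptI)
    fix T assume "x \<in> T" "open T"
    moreover have "x islimpt X" "x \<in> G"
      using that cantor_setD(3)[OF assms(1)] G by auto
    ultimately obtain y where "y \<in> X" "y \<in> T \<inter> G" "y \<noteq> x"
      using G(1) by (metis IntI islimptE open_Int)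
    then show "\<exists>y\<in>U. y \<in> T \<and> y \<noteq> x"
      using G by auto
  qed
  moreover have "totally_disconnected U"
    using cantor_setD(4)[OF assms(1)] G unfolding totally_disconnected_def by blast
  ultimately show ?thesis
    using assms(2,3) unfolding cantor_set_iff clopen_in_def by blast
qed

lemma clopen_in_Union:
  assumes "compact X" "finite \<U>" "\<And>U. U \<in> \<U> \<Longrightarrow> clopen_in X U"
  shows "clopen_in X (\<Union>\<U>)"
  using assms(2,3)
proof (induction rule: finite_induct)
  case empty
  then show ?case using assms(1) by (simp add: clopen_in_def)
qed (simp add: clopen_in_Un)

definition small_set :: "real \<Rightarrow> 'a::metric_space set \<Rightarrow> bool" where
  "small_set e W \<longleftrightarrow> (\<forall>x\<in>W. \<forall>y\<in>W. dist x y < e)"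

lemma small_set_subset: "small_set e W \<Longrightarrow> V \<subseteq> W \<Longrightarrow> small_set e V"
  unfolding small_set_def by blast

definition clopen_partition :: "'a::metric_space set \<Rightarrow> real \<Rightarrow> 'a set set \<Rightarrow> bool" where
  "clopen_partition X e P \<longleftrightarrow> finite P \<and> disjoint P \<and> \<Union>P = X
     \<and> (\<forall>W\<in>P. W \<noteq> {} \<and> clopen_in X W \<and> small_set e W)"

lemma disjoint_cover_of_clopen_cover:
  assumes "compact X" "finite \<W>" "\<And>W. W \<in> \<W> \<Longrightarrow> clopen_in X W \<and> small_set e W"
  shows "\<exists>P. finite P \<and> disjoint P \<and> \<Union>P = \<Union>\<W> \<and> (\<forall>W\<in>P. W \<noteq> {} \<and> clopen_in X W \<and> small_set e W)"
  using assms(2,3)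
proof (induction rule: finite_induct)
  case empty
  then show ?case by (intro exI[of _ "{}"]) auto
next
  case (insert W \<W>)
  then obtain P where P: "finite P" "disjoint P" "\<Union>P = \<Union>\<W>"
    "\<forall>V\<in>P. V \<noteq> {} \<and> clopen_in X V \<and> small_set e V"
    by auto
  define D where "D = W - \<Union>P"
  have D: "clopen_in X D" "small_set e D"
    using insert.prems P clopen_in_Union[OF assms(1), of P] small_set_subset[of e W D]
    by (auto simp: D_def clopen_in_Diff)
  show ?case
  proof (cases "D = {}")
    case True
    then show ?thesis
      using P by (intro exI[of _ P]) (auto simp: D_def)
  next
    case False
    have "disjoint (insert D P)"
      using P(2) by (auto simp: pairwise_insert D_def disjnt_def)
    then show ?thesis
      using P D False by (intro exI[of _ "insert D P"]) (auto simp: D_def)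
  qed
qed

lemma clopen_partition_exists:
  fixes X :: "'a::metric_space set"
  assumes X: "compact X" "totally_disconnected X" and e: "e > 0"
  shows "\<exists>P. clopen_partition X e P"
proof -
  have "\<exists>W. clopen_in X W \<and> x \<in> W \<and> W \<subseteq> ball x (e/2)" if x: "x \<in> X" for x
  proof -
    have "compact (X - ball x (e/2))"
      using X(1) by (simp add: Diff_eq compact_Int_closed closed_Compl)
    then obtain W where "clopen_in X W" "x \<in> W" "W \<inter> (X - ball x (e/2)) = {}"
      by (rule clopen_in_separating[OF X x]) (use e in auto)
    then show ?thesis
      by (auto simp: clopen_in_def)
  qed
  then obtain W where W: "\<And>x. x \<in> X \<Longrightarrow> clopen_in X (W x) \<and> x \<in> W x \<and> W x \<subseteq> ball x (e/2)"
    by metis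
  have "open (- (X - W x))" if "x \<in> X" for x
    using W[OF that] unfolding clopen_in_def by (intro open_Compl compact_imp_closed) auto
  moreover have "X \<subseteq> (\<Union>x\<in>X. - (X - W x))"
    using W by blast
  ultimately obtain F where F: "F \<subseteq> X" "finite F" "X \<subseteq> (\<Union>x\<in>F. - (X - W x))"
    using compactE_image[OF X(1), of X "\<lambda>x. - (X - W x)"] by blast
  have "small_set e (W x)" if "x \<in> X" for x
    unfolding small_set_def
  proof (intro ballI)
    fix y z assume "y \<in> W x" "z \<in> W x"
    then have "dist x y < e/2" "dist x z < e/2"
      using W[OF that] by auto
    then show "dist y z < e"
      using dist_triangle[of y z x] by (simp add: dist_commute)
  qed
  then have "\<exists>P. finite P \<and> disjoint P \<and> \<Union>P = \<Union>(W ` F) \<and> (\<forall>V\<in>P. V \<noteq> {} \<and> clopen_in X V \<and> small_set e V)"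
    using F W by (intro disjoint_cover_of_clopen_cover[OF X(1)]) auto
  moreover have "\<Union>(W ` F) = X"
  proof
    show "\<Union>(W ` F) \<subseteq> X"
      using F(1) W by (force simp: clopen_in_def)
    show "X \<subseteq> \<Union>(W ` F)"
      using F(3) by blast
  qed
  ultimately show ?thesis
    unfolding clopen_partition_def by metis
qed

lemma clopen_in_split:
  assumes X: "cantor_set X" and W: "clopen_in X W" "W \<noteq> {}"
  obtains W1 W2 where "clopen_in X W1" "clopen_in X W2" "W1 \<noteq> {}" "W2 \<noteq> {}"
    "W1 \<inter> W2 = {}" "W1 \<union> W2 = W"
proof -
  obtain x where x: "x \<in> W"
    using W by auto
  have "x islimpt W"
    using cantor_setD(3)[OF cantor_set_clopen_in[OF X W]] x .
  then obtain y where y: "y \<in> W" "y \<noteq> x"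
    using islimptE[OF _ UNIV_I open_UNIV] by blast
  have "compact {y}" "{y} \<subseteq> X" "x \<in> X" "x \<notin> {y}"
    using W(1) x y by (auto simp: clopen_in_def)
  then obtain V where V: "clopen_in X V" "x \<in> V" "V \<inter> {y} = {}"
    using clopen_in_separating[OF cantor_setD(2,4)[OF X]] by metis
  show ?thesis
  proof (rule that)
    show "clopen_in X (W \<inter> V)" "clopen_in X (W - V)"
      using W(1) V(1) by (simp_all add: clopen_in_Int clopen_in_Diff)
    show "W \<inter> V \<noteq> {}" "W - V \<noteq> {}"
      using V x y by auto
  qed auto
qed

lemma clopen_partition_card_grow:
  assumes X: "cantor_set X" and P: "clopen_partition X e P"
  shows "\<exists>P'. clopen_partition X e P' \<and> card P' = card P + d"
proof (induction d)
  case 0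
  then show ?case using P by auto
next
  case (Suc d)
  then obtain P' where P': "clopen_partition X e P'" "card P' = card P + d"
    by auto
  then have fin: "finite P'" and disj: "disjoint P'" and cov: "\<Union>P' = X"
    and pieces: "\<And>V. V \<in> P' \<Longrightarrow> V \<noteq> {} \<and> clopen_in X V \<and> small_set e V"
    by (auto simp: clopen_partition_def)
  obtain W where W: "W \<in> P'"
    using cantor_setD(1)[OF X] cov by auto
  then have Wc: "W \<noteq> {}" "clopen_in X W" "small_set e W"
    using pieces by auto
  obtain W1 W2 where W12: "clopen_in X W1" "clopen_in X W2" "W1 \<noteq> {}" "W2 \<noteq> {}"
    "W1 \<inter> W2 = {}" "W1 \<union> W2 = W"
    using clopen_in_split[OF X Wc(2,1)] by blast
  have dis: "V \<inter> W1 = {} \<and> V \<inter> W2 = {}" if "V \<in> P' - {W}" for V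
  proof -
    have "V \<inter> W = {}"
      using disj W that by (auto simp: pairwise_def disjnt_def)
    then show ?thesis
      using W12(6) by blast
  qed
  define P'' where "P'' = insert W1 (insert W2 (P' - {W}))"
  have new: "W1 \<notin> P' - {W}" "W2 \<notin> P' - {W}" "W1 \<noteq> W2"
    using dis[of W1] dis[of W2] W12(3-5) by auto
  then have "card P'' = card P' + 1"
    using fin W card.remove[OF fin W] by (simp add: P''_def)
  moreover have "clopen_partition X e P''"
    unfolding clopen_partition_def
  proof (intro conjI)
    show "finite P''"
      using fin by (simp add: P''_def)
    have "disjoint (P' - {W})"
      using pairwise_subset[OF disj] by blast
    then show "disjoint P''"
      unfolding P''_def pairwise_insert using dis W12(5) by (auto simp: disjnt_def)
    show "\<Union>P'' = X"
      using cov W W12(6) by (auto simp: P''_def)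
    show "\<forall>V\<in>P''. V \<noteq> {} \<and> clopen_in X V \<and> small_set e V"
    proof
      fix V assume "V \<in> P''"
      then consider "V = W1" | "V = W2" | "V \<in> P'"
        by (auto simp: P''_def)
      then show "V \<noteq> {} \<and> clopen_in X V \<and> small_set e V"
        by cases (use W12 pieces[of V] small_set_subset[OF Wc(3), of V] in auto)
    qed
  qed
  ultimately show ?case
    using P'(2) by auto
qed

definition matched_partition :: "'a::metric_space set \<Rightarrow> 'b::metric_space set \<Rightarrow> ('a set \<times> 'b set) set \<Rightarrow> bool" where
  "matched_partition X Y S \<longleftrightarrow> finite S \<and> \<Union>(fst ` S) = X \<and> \<Union>(snd ` S) = Y
     \<and> (\<forall>p\<in>S. fst p \<noteq> {} \<and> snd p \<noteq> {} \<and> clopen_in X (fst p) \<and> clopen_in Y (snd p))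
     \<and> (\<forall>p\<in>S. \<forall>q\<in>S. p \<noteq> q \<longrightarrow> fst p \<inter> fst q = {} \<and> snd p \<inter> snd q = {})"

definition mesh_below :: "real \<Rightarrow> ('a::metric_space set \<times> 'b::metric_space set) set \<Rightarrow> bool" where
  "mesh_below e S \<longleftrightarrow> (\<forall>p\<in>S. small_set e (fst p) \<and> small_set e (snd p))"

definition refines :: "('a set \<times> 'b set) set \<Rightarrow> ('a set \<times> 'b set) set \<Rightarrow> bool" where
  "refines S' S \<longleftrightarrow> (\<forall>p'\<in>S'. \<exists>p\<in>S. fst p' \<subseteq> fst p \<and> snd p' \<subseteq> snd p)"

lemma matched_partition_exists:
  fixes X :: "'a::metric_space set" and Y :: "'b::metric_space set"
  assumes X: "cantor_set X" and Y: "cantor_set Y" and e: "e > 0"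
  shows "\<exists>S. matched_partition X Y S \<and> mesh_below e S"
proof -
  obtain PX where PX: "clopen_partition X e PX"
    using clopen_partition_exists[OF cantor_setD(2,4)[OF X] e] by blast
  obtain PY where PY: "clopen_partition Y e PY"
    using clopen_partition_exists[OF cantor_setD(2,4)[OF Y] e] by blast
  obtain PX' where PX': "clopen_partition X e PX'" "card PX' = card PX + card PY"
    using clopen_partition_card_grow[OF X PX] by blast
  obtain PY' where PY': "clopen_partition Y e PY'" "card PY' = card PY + card PX"
    using clopen_partition_card_grow[OF Y PY] by blast
  have "finite PX'" "finite PY'" "card PX' = card PY'"
    using PX' PY' by (auto simp: clopen_partition_def)
  then obtain b where b: "bij_betw b PX' PY'"
    using finite_same_card_bij by blast
  define S where "S = (\<lambda>A. (A, b A)) ` PX'"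
  have bPX: "b ` PX' = PY'" and "inj_on b PX'"
    using b by (auto simp: bij_betw_def)
  have "A \<inter> A' = {} \<and> b A \<inter> b A' = {}" if "A \<in> PX'" "A' \<in> PX'" "A \<noteq> A'" for A A'
  proof -
    have "b A \<noteq> b A'" "b A \<in> PY'" "b A' \<in> PY'"
      using \<open>inj_on b PX'\<close> bPX that by (auto simp: inj_on_def)
    moreover have "disjoint PX'" "disjoint PY'"
      using PX'(1) PY'(1) by (simp_all add: clopen_partition_def)
    ultimately have "disjnt A A'" "disjnt (b A) (b A')"
      using that by (simp_all add: pairwiseD)
    then show ?thesis
      by (simp add: disjnt_def)
  qed
  then have disj: "\<forall>p\<in>S. \<forall>q\<in>S. p \<noteq> q \<longrightarrow> fst p \<inter> fst q = {} \<and> snd p \<inter> snd q = {}"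
    by (auto simp: S_def)
  have "fst ` S = PX'" "snd ` S = PY'"
    using bPX by (force simp: S_def image_image)+
  then have "matched_partition X Y S \<and> mesh_below e S"
    using PX'(1) PY'(1) disj \<open>finite PX'\<close>
    unfolding matched_partition_def mesh_below_def clopen_partition_def
    by (simp add: S_def flip: bPX)
  then show ?thesis by blast
qed

lemma matched_partition_refine:
  fixes X :: "'a::metric_space set" and Y :: "'b::metric_space set"
  assumes X: "cantor_set X" and Y: "cantor_set Y" and S: "matched_partition X Y S" and e: "e > 0"
  shows "\<exists>S'. matched_partition X Y S' \<and> refines S' S \<and> mesh_below e S'"
proof -
  have "\<exists>Q. matched_partition (fst p) (snd p) Q \<and> mesh_below e Q" if "p \<in> S" for p
  proof -
    have "cantor_set (fst p)" "cantor_set (snd p)"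
      using S that cantor_set_clopen_in[OF X] cantor_set_clopen_in[OF Y]
      unfolding matched_partition_def by blast+
    then show ?thesis
      using matched_partition_exists e by blast
  qed
  then obtain Q where Q: "\<And>p. p \<in> S \<Longrightarrow> matched_partition (fst p) (snd p) (Q p) \<and> mesh_below e (Q p)"
    by metis
  have sub: "fst p' \<subseteq> fst p \<and> snd p' \<subseteq> snd p" if "p \<in> S" "p' \<in> Q p" for p p'
    using Q[OF that(1)] that(2) unfolding matched_partition_def by blast
  have "matched_partition X Y (\<Union>(Q ` S))"
    unfolding matched_partition_def
  proof (intro conjI)
    show "finite (\<Union>(Q ` S))"
      using S Q by (auto simp: matched_partition_def)
    have "\<Union>(fst ` \<Union>(Q ` S)) = (\<Union>p\<in>S. \<Union>(fst ` Q p))"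
      by auto
    also have "\<dots> = X"
      using S Q unfolding matched_partition_def by simp
    finally show "\<Union>(fst ` \<Union>(Q ` S)) = X" .
    have "\<Union>(snd ` \<Union>(Q ` S)) = (\<Union>p\<in>S. \<Union>(snd ` Q p))"
      by auto
    also have "\<dots> = Y"
      using S Q unfolding matched_partition_def by simp
    finally show "\<Union>(snd ` \<Union>(Q ` S)) = Y" .
    show "\<forall>p'\<in>\<Union>(Q ` S). fst p' \<noteq> {} \<and> snd p' \<noteq> {} \<and> clopen_in X (fst p') \<and> clopen_in Y (snd p')"
      using S Q unfolding matched_partition_def by (blast intro: clopen_in_trans)
    show "\<forall>p'\<in>\<Union>(Q ` S). \<forall>q'\<in>\<Union>(Q ` S). p' \<noteq> q' \<longrightarrow> fst p' \<inter> fst q' = {} \<and> snd p' \<inter> snd q' = {}"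
    proof (intro ballI impI)
      fix p' q' assume "p' \<in> \<Union>(Q ` S)" "q' \<in> \<Union>(Q ` S)" "p' \<noteq> q'"
      then obtain p q where pq: "p \<in> S" "p' \<in> Q p" "q \<in> S" "q' \<in> Q q" "p' \<noteq> q'"
        by blast
      show "fst p' \<inter> fst q' = {} \<and> snd p' \<inter> snd q' = {}"
      proof (cases "p = q")
        case True
        then show ?thesis using Q[OF pq(1)] pq unfolding matched_partition_def by blast
      next
        case False
        then show ?thesis using S pq sub[OF pq(1,2)] sub[OF pq(3,4)] unfolding matched_partition_def by blast
      qed
    qed
  qed
  moreover have "refines (\<Union>(Q ` S)) S"
    unfolding refines_def using sub by blast
  moreover have "mesh_below e (\<Union>(Q ` S))"
    using Q by (auto simp: mesh_below_def)
  ultimately show ?thesis by blast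
qed

lemma clopen_in_finite_partition:
  assumes "finite I" "\<And>i. i \<in> I \<Longrightarrow> compact (B i)"
    and "\<And>i j. i \<in> I \<Longrightarrow> j \<in> I \<Longrightarrow> i \<noteq> j \<Longrightarrow> B i \<inter> B j = {}"
    and "X = (\<Union>i\<in>I. B i)" and "i \<in> I"
  shows "clopen_in X (B i)"
proof -
  have "X - B i = (\<Union>j\<in>I - {i}. B j)"
    using assms(3-5) by auto
  moreover have "compact (\<Union>j\<in>I - {i}. B j)"
    using assms(1,2) by (intro compact_UN) auto
  ultimately show ?thesis
    using assms(2,4,5) by (auto simp: clopen_in_def)
qed

section \<open>Homeomorphisms matching two clopen partitions\<close>

lemma matched_partition_unique_piece:
  assumes "matched_partition X Y S" "x \<in> X"
  shows "\<exists>!p. p \<in> S \<and> x \<in> fst p"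
proof -
  obtain p where "p \<in> S" "x \<in> fst p"
    using assms unfolding matched_partition_def by blast
  moreover have "q = p" if "q \<in> S" "x \<in> fst q" for q
    using assms(1) that calculation unfolding matched_partition_def by blast
  ultimately show ?thesis
    by blast
qed

lemma eq_if_dist_less_inverse:
  fixes a b :: "'a::metric_space"
  assumes "\<And>n. dist a b < inverse (real (Suc n))"
  shows "a = b"
proof (rule ccontr)
  assume "a \<noteq> b"
  then obtain n where "inverse (real (Suc n)) < dist a b"
    using reals_Archimedean zero_less_dist_iff by blast
  then show False
    using assms[of n] by simp
qed

lemma matched_partitions_limit_map:
  fixes X :: "'a::metric_space set" and Y :: "'b::metric_space set"
  assumes S: "\<And>n. matched_partition X Y (Sq n)"
    and ref: "\<And>n. refines (Sq (Suc n)) (Sq n)"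
    and mesh: "\<And>n. mesh_below (inverse (real (Suc n))) (Sq (Suc n))"
  obtains h where "\<And>n p. p \<in> Sq n \<Longrightarrow> h ` fst p \<subseteq> snd p" "continuous_on X h"
proof -
  define piece where "piece n x = (THE p. p \<in> Sq n \<and> x \<in> fst p)" for n x
  have piece: "piece n x \<in> Sq n" "x \<in> fst (piece n x)" if "x \<in> X" for x n
    using theI'[OF matched_partition_unique_piece[OF S that, of n]] by (simp_all add: piece_def)
  have piece_eq: "piece n x = p" if "p \<in> Sq n" "x \<in> fst p" for x n p
  proof -
    have "x \<in> X"
      using S[of n] that unfolding matched_partition_def by blast
    then show ?thesis
      unfolding piece_def using the1_equality[OF matched_partition_unique_piece[OF S]] that by blast
  qed
  have pieces_of_Y: "compact (snd (piece n x))" "snd (piece n x) \<noteq> {}" if "x \<in> X" for x n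
    using piece[OF that, of n] S[of n] by (auto simp: matched_partition_def clopen_in_def)
  have "snd (piece (Suc n) x) \<subseteq> snd (piece n x)" if x: "x \<in> X" for x n
  proof -
    obtain p where p: "p \<in> Sq n" "fst (piece (Suc n) x) \<subseteq> fst p" "snd (piece (Suc n) x) \<subseteq> snd p"
      using ref[of n] piece[OF x, of "Suc n"] unfolding refines_def by blast
    then have "p = piece n x"
      using piece_eq piece[OF x, of "Suc n"] by blast
    then show ?thesis
      using p(3) by simp
  qed
  then have nested: "snd (piece m x) \<subseteq> snd (piece n x)" if "x \<in> X" "n \<le> m" for x n m
    using lift_Suc_antimono_le[of "\<lambda>n. snd (piece n x)"] that by blast
  have "\<exists>y. \<forall>n. y \<in> snd (piece n x)" if x: "x \<in> X" for x
  proof -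
    have "snd (piece 0 x) \<inter> (\<Inter>n. snd (piece n x)) \<noteq> {}"
    proof (rule compact_imp_fip_image[OF pieces_of_Y(1)[OF x]])
      show "closed (snd (piece n x))" for n
        using pieces_of_Y(1)[OF x] by (rule compact_imp_closed)
      fix I :: "nat set" assume "finite I"
      then have "i \<le> Max (insert 0 I)" if "i \<in> insert 0 I" for i
        using that by simp
      then have "snd (piece (Max (insert 0 I)) x) \<subseteq> snd (piece 0 x) \<inter> (\<Inter>i\<in>I. snd (piece i x))"
        using nested[OF x] by blast
      then show "snd (piece 0 x) \<inter> (\<Inter>i\<in>I. snd (piece i x)) \<noteq> {}"
        using pieces_of_Y(2)[OF x] by blast
    qed
    then show ?thesis
      by blast
  qed
  then obtain h where h: "\<And>x n. x \<in> X \<Longrightarrow> h x \<in> snd (piece n x)"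
    by metis
  show ?thesis
  proof
    show "h ` fst p \<subseteq> snd p" if "p \<in> Sq n" for p n
      using h piece_eq that S[of n] unfolding matched_partition_def by blast
    show "continuous_on X h"
      unfolding continuous_on_iff
    proof (intro ballI allI impI)
      fix x and e :: real assume x: "x \<in> X" and e: "0 < e"
      obtain n where n: "inverse (real (Suc n)) < e"
        using reals_Archimedean[OF e] by blast
      let ?p = "piece (Suc n) x"
      have "clopen_in X (fst ?p)"
        using piece[OF x] S[of "Suc n"] unfolding matched_partition_def by blast
      then obtain G where G: "open G" "fst ?p = X \<inter> G"
        by (rule clopen_in_open)
      then obtain d where d: "d > 0" "ball x d \<subseteq> G"
        using piece(2)[OF x] open_contains_ball by blast
      have "dist (h x') (h x) < e" if "x' \<in> X" "dist x' x < d" for x'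
      proof -
        have "x' \<in> fst ?p"
          using that G d by (auto simp: dist_commute)
        then have "piece (Suc n) x' = ?p"
          using piece_eq[OF piece(1)[OF x]] by blast
        then have "h x' \<in> snd ?p" "h x \<in> snd ?p"
          using h[OF that(1), of "Suc n"] h[OF x] by simp_all
        then have "dist (h x') (h x) < inverse (real (Suc n))"
          using mesh[of n] piece(1)[OF x, of "Suc n"] unfolding mesh_below_def small_set_def by blast
        then show ?thesis
          using n by simp
      qed
      then show "\<exists>d>0. \<forall>x'\<in>X. dist x' x < d \<longrightarrow> dist (h x') (h x) < e"
        using d(1) by blast
    qed
  qed
qed

lemma matched_partition_swap:
  assumes "matched_partition X Y S"
  shows "matched_partition Y X (prod.swap ` S)"
proof -
  have "fst p \<inter> fst q = {} \<and> snd p \<inter> snd q = {}"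
    if pq: "p \<in> prod.swap ` S" "q \<in> prod.swap ` S" "p \<noteq> q" for p q
  proof -
    obtain a b where "a \<in> S" "b \<in> S" "p = prod.swap a" "q = prod.swap b"
      using pq(1,2) by blast
    moreover from this have "a \<noteq> b"
      using pq(3) by blast
    ultimately show ?thesis
      using assms unfolding matched_partition_def by auto
  qed
  moreover have "fst \<circ> prod.swap = snd" "snd \<circ> prod.swap = fst"
    by auto
  ultimately show ?thesis
    using assms unfolding matched_partition_def by (simp add: image_comp)
qed

lemma refines_swap: "refines S' S \<Longrightarrow> refines (prod.swap ` S') (prod.swap ` S)"
  unfolding refines_def by fastforce

lemma mesh_below_swap: "mesh_below e S \<Longrightarrow> mesh_below e (prod.swap ` S)"
  unfolding mesh_below_def by auto

theorem cantor_sets_homeomorphic_matching: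
  fixes X :: "'a::metric_space set" and Y :: "'b::metric_space set"
  assumes X: "cantor_set X" and Y: "cantor_set Y" and S0: "matched_partition X Y S0"
  obtains h g where "homeomorphism X Y h g" "\<And>p. p \<in> S0 \<Longrightarrow> h ` fst p = snd p"
proof -
  have "\<exists>Sq. \<forall>n. (matched_partition X Y (Sq n) \<and> (n = 0 \<longrightarrow> Sq n = S0))
      \<and> (refines (Sq (Suc n)) (Sq n) \<and> mesh_below (inverse (real (Suc n))) (Sq (Suc n)))"
    using S0 matched_partition_refine[OF X Y] by (intro dependent_nat_choice) auto
  then obtain Sq where S: "\<And>n. matched_partition X Y (Sq n)" and "Sq 0 = S0"
    and ref: "\<And>n. refines (Sq (Suc n)) (Sq n)"
    and mesh: "\<And>n. mesh_below (inverse (real (Suc n))) (Sq (Suc n))"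
    by blast
  obtain h where h: "\<And>n p. p \<in> Sq n \<Longrightarrow> h ` fst p \<subseteq> snd p" "continuous_on X h"
    using matched_partitions_limit_map[OF S ref mesh] by blast
  obtain g where g_swap: "\<And>n p. p \<in> prod.swap ` Sq n \<Longrightarrow> g ` fst p \<subseteq> snd p"
    and g_cont: "continuous_on Y g"
    using matched_partitions_limit_map[OF matched_partition_swap[OF S] refines_swap[OF ref]
        mesh_below_swap[OF mesh]] by blast
  have g: "g ` snd p \<subseteq> fst p" if "p \<in> Sq n" for n p
    using g_swap[of "prod.swap p" n] that by auto
  have cover_X: "\<exists>p\<in>Sq n. x \<in> fst p" if "x \<in> X" for x n
    using S[of n] that unfolding matched_partition_def by blast
  have cover_Y: "\<exists>p\<in>Sq n. y \<in> snd p" if "y \<in> Y" for y n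
    using S[of n] that unfolding matched_partition_def by blast
  have within: "fst p \<subseteq> X" "snd p \<subseteq> Y" if "p \<in> Sq n" for p n
    using S[of n] that unfolding matched_partition_def by auto
  have into: "h ` X \<subseteq> Y" "g ` Y \<subseteq> X"
  proof safe
    fix x assume "x \<in> X"
    then obtain p where "p \<in> Sq 0" "x \<in> fst p"
      using cover_X by blast
    then show "h x \<in> Y"
      using h(1) within by blast
  next
    fix y assume "y \<in> Y"
    then obtain p where "p \<in> Sq 0" "y \<in> snd p"
      using cover_Y by blast
    then show "g y \<in> X"
      using g within by blast
  qed
  have "g (h x) = x" if x: "x \<in> X" for x
  proof (rule eq_if_dist_less_inverse)
    fix n
    obtain p where "p \<in> Sq (Suc n)" "x \<in> fst p"
      using cover_X[OF x] by blast
    moreover from this have "g (h x) \<in> fst p"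
      using h(1) g by blast
    ultimately show "dist (g (h x)) x < inverse (real (Suc n))"
      using mesh[of n] by (auto simp: mesh_below_def small_set_def)
  qed
  moreover have hg: "h (g y) = y" if y: "y \<in> Y" for y
  proof (rule eq_if_dist_less_inverse)
    fix n
    obtain p where "p \<in> Sq (Suc n)" "y \<in> snd p"
      using cover_Y[OF y] by blast
    moreover from this have "h (g y) \<in> snd p"
      using h(1) g by blast
    ultimately show "dist (h (g y)) y < inverse (real (Suc n))"
      using mesh[of n] by (auto simp: mesh_below_def small_set_def)
  qed
  ultimately have "homeomorphism X Y h g"
    using h(2) g_cont into by (intro homeomorphismI) auto
  moreover have "h ` fst p = snd p" if "p \<in> S0" for p
  proof
    show "h ` fst p \<subseteq> snd p"
      using h(1) that \<open>Sq 0 = S0\<close> by blast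
    have "snd p \<subseteq> Y"
      using within that \<open>Sq 0 = S0\<close> by blast
    show "snd p \<subseteq> h ` fst p"
    proof
      fix y assume "y \<in> snd p"
      then have "g y \<in> fst p" "h (g y) = y"
        using g that \<open>Sq 0 = S0\<close> hg \<open>snd p \<subseteq> Y\<close> by blast+
      then show "y \<in> h ` fst p"
        by (metis image_eqI)
    qed
  qed
  ultimately show ?thesis
    using that by blast
qed

section \<open>Omega-limit sets\<close>

lemma continuous_on_funpow:
  assumes "continuous_on K f" "f ` K \<subseteq> K"
  shows "continuous_on K (f ^^ n) \<and> (f ^^ n) ` K \<subseteq> K"
proof (induction n)
  case (Suc n)
  then have "continuous_on K (f \<circ> (f ^^ n))"
    using assms by (intro continuous_on_compose) (auto elim: continuous_on_subset)
  then show ?case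
    using Suc assms by auto
qed (simp add: continuous_on_id)

lemma funpow_mult_add_periodic:
  assumes "(f ^^ P) q = q"
  shows "(f ^^ (k * P + r)) q = (f ^^ r) q"
proof -
  have "((f ^^ P) ^^ k) q = q"
    using assms by (induction k) auto
  then have "(f ^^ (k * P)) q = q"
    by (simp add: funpow_mult mult.commute)
  then show ?thesis
    by (simp only: add.commute[of "k * P" r] funpow_add comp_apply)
qed

lemma omega_limit_setI:
  assumes "filterlim s at_top sequentially" "(\<lambda>k. (f ^^ s k) x) \<longlonglongrightarrow> y"
  shows "y \<in> omega_limit_set f x"
  unfolding omega_limit_set_def
proof (intro CollectI allI impI)
  fix e :: real and M assume "e > 0"
  then have "\<forall>\<^sub>F k in sequentially. M \<le> s k \<and> dist ((f ^^ s k) x) y < e"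
    using assms by (intro eventually_conj) (auto simp: filterlim_at_top tendsto_iff)
  then obtain k where "M \<le> s k" "dist ((f ^^ s k) x) y < e"
    unfolding eventually_sequentially by blast
  then show "\<exists>n\<ge>M. dist ((f ^^ n) x) y < e"
    by blast
qed

lemma omega_limit_set_subset_cycle:
  fixes f :: "'a::metric_space \<Rightarrow> 'a"
  assumes P: "P > 0" and lim: "\<And>r. (\<lambda>k. (f ^^ (k * P + r)) x) \<longlonglongrightarrow> (f ^^ r) q"
  shows "omega_limit_set f x \<subseteq> (\<lambda>r. (f ^^ r) q) ` {..<P}"
proof
  fix y assume y: "y \<in> omega_limit_set f x"
  define C where "C = (\<lambda>r. (f ^^ r) q) ` {..<P}"
  show "y \<in> C"
  proof (rule ccontr)
    assume "y \<notin> C"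
    moreover obtain d where d: "d > 0" "\<And>z. z \<in> C \<Longrightarrow> z \<noteq> y \<Longrightarrow> d \<le> dist y z"
      using finite_set_avoid[of C y] by (auto simp: C_def)
    ultimately have far: "d \<le> dist y ((f ^^ r) q)" if "r < P" for r
      using that by (auto simp: C_def)
    have "\<forall>\<^sub>F k in sequentially. \<forall>r\<in>{..<P}. dist ((f ^^ (k * P + r)) x) ((f ^^ r) q) < d/2"
      using d(1) by (intro eventually_ball_finite ballI tendstoD[OF lim]) auto
    then obtain N where N: "\<And>k r. N \<le> k \<Longrightarrow> r < P \<Longrightarrow> dist ((f ^^ (k * P + r)) x) ((f ^^ r) q) < d/2"
      unfolding eventually_sequentially by blast
    have "\<forall>e>0. \<forall>M. \<exists>n\<ge>M. dist ((f ^^ n) x) y < e"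
      using y by (simp add: omega_limit_set_def)
    then obtain n where n: "N * P \<le> n" "dist ((f ^^ n) x) y < d/2"
      using half_gt_zero[OF d(1)] by meson
    have "N * P div P \<le> n div P"
      using n(1) by (rule div_le_mono)
    then have "dist ((f ^^ (n mod P)) q) ((f ^^ n) x) < d/2"
      using N[of "n div P" "n mod P"] P by (simp add: dist_commute)
    then have "dist y ((f ^^ (n mod P)) q) < d"
      using n(2) by (simp add: dist_commute dist_triangle_half_l)
    then show False
      using far[of "n mod P"] P by simp
  qed
qed

definition asymptotically_periodic :: "('a::metric_space \<Rightarrow> 'a) \<Rightarrow> 'a \<Rightarrow> bool" where
  "asymptotically_periodic f x \<longleftrightarrow>
     (\<exists>q P. P > 0 \<and> (f ^^ P) q = q \<and> (\<lambda>k. (f ^^ (k * P)) x) \<longlonglongrightarrow> q)"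

lemma periodic_orbit_omega_limit_set:
  fixes f :: "'a::metric_space \<Rightarrow> 'a"
  assumes cont: "continuous_on K f" and inv: "f ` K \<subseteq> K" and "closed K" and x: "x \<in> K"
    and "asymptotically_periodic f x"
  shows "periodic_orbit f (omega_limit_set f x)"
proof -
  obtain q P where P: "P > 0" and per: "(f ^^ P) q = q" and conv: "(\<lambda>k. (f ^^ (k * P)) x) \<longlonglongrightarrow> q"
    using assms(5) unfolding asymptotically_periodic_def by blast
  have orbit: "(f ^^ (k * P)) x \<in> K" for k
    using continuous_on_funpow[OF cont inv] x by blast
  then have "q \<in> K"
    using closed_sequentially[OF \<open>closed K\<close> _ conv] by blast
  have lim: "(\<lambda>k. (f ^^ (k * P + r)) x) \<longlonglongrightarrow> (f ^^ r) q" for r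
  proof -
    have "(\<lambda>k. (f ^^ r) ((f ^^ (k * P)) x)) \<longlonglongrightarrow> (f ^^ r) q"
      using continuous_on_tendsto_compose[OF conjunct1[OF continuous_on_funpow[OF cont inv]] conv \<open>q \<in> K\<close>]
        orbit by simp
    then show ?thesis
      by (simp add: funpow_add add.commute)
  qed
  have cycle: "{(f ^^ n) q | n. True} = (\<lambda>r. (f ^^ r) q) ` {..<P}"
  proof (intro equalityI subsetI)
    fix y assume "y \<in> {(f ^^ n) q | n. True}"
    then obtain n where "y = (f ^^ n) q"
      by blast
    moreover have "(f ^^ n) q = (f ^^ (n mod P)) q"
      using funpow_mult_add_periodic[OF per, of "n div P" "n mod P"] by simp
    ultimately show "y \<in> (\<lambda>r. (f ^^ r) q) ` {..<P}"
      using P by auto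
  qed auto
  have "(f ^^ r) q \<in> omega_limit_set f x" for r
  proof (rule omega_limit_setI[OF _ lim])
    show "filterlim (\<lambda>k. k * P + r) at_top sequentially"
      using P by (intro filterlim_subseq strict_monoI) simp
  qed
  then have "omega_limit_set f x = {(f ^^ n) q | n. True}"
    using omega_limit_set_subset_cycle[OF P lim] cycle by auto
  then show ?thesis
    unfolding periodic_orbit_def using P per by blast
qed

section \<open>Eventually periodic walks in a finite graph\<close>

lemma funpow_eq_if_mod_fact_eq:
  assumes V: "finite V" "f ` V \<subseteq> V" "x \<in> V"
    and kl: "card V \<le> k" "card V \<le> l" "k mod fact (card V) = l mod fact (card V)"
  shows "(f ^^ k) x = (f ^^ l) x"
proof -
  have inV: "(f ^^ i) x \<in> V" for i
    by (induction i) (use V in auto)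
  have "\<not> inj_on (\<lambda>i. (f ^^ i) x) {0..card V}"
  proof
    assume "inj_on (\<lambda>i. (f ^^ i) x) {0..card V}"
    then have "card {0..card V} \<le> card V"
      using V(1) inV card_inj_on_le[of _ "{0..card V}" V] by blast
    then show False
      by simp
  qed
  then obtain a b where ab: "a \<le> card V" "b \<le> card V" "a \<noteq> b" "(f ^^ a) x = (f ^^ b) x"
    unfolding inj_on_def by auto
  have "\<exists>i j. i < j \<and> j \<le> card V \<and> (f ^^ i) x = (f ^^ j) x"
  proof (cases "a < b")
    case True
    then show ?thesis
      using ab by blast
  next
    case False
    then show ?thesis
      using ab by (intro exI[of _ b] exI[of _ a]) auto
  qed
  then obtain i j where ij: "i < j" "j \<le> card V" "(f ^^ i) x = (f ^^ j) x"
    by blast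
  define d where "d = j - i"
  have step: "(f ^^ (t + d)) x = (f ^^ t) x" if "i \<le> t" for t
  proof -
    have "t + d = (t - i) + j" "(t - i) + i = t"
      using that ij(1) by (simp_all add: d_def)
    have "(f ^^ (t + d)) x = (f ^^ (t - i)) ((f ^^ j) x)"
      unfolding \<open>t + d = (t - i) + j\<close> by (simp only: funpow_add comp_apply)
    also have "\<dots> = (f ^^ ((t - i) + i)) x"
      unfolding ij(3)[symmetric] by (simp only: funpow_add comp_apply)
    finally show ?thesis
      unfolding \<open>(t - i) + i = t\<close> .
  qed
  have period: "(f ^^ (t + c * d)) x = (f ^^ t) x" if "i \<le> t" for t c
  proof (induction c)
    case (Suc c)
    have "(f ^^ (t + Suc c * d)) x = (f ^^ ((t + c * d) + d)) x"
      by (simp add: algebra_simps)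
    also have "\<dots> = (f ^^ (t + c * d)) x"
      using that by (intro step) simp
    finally show ?case
      using Suc by simp
  qed simp
  have "d dvd fact (card V)"
    using ij by (intro dvd_fact) (auto simp: d_def)
  then obtain c0 where c0: "fact (card V) = d * c0"
    by (rule dvdE)
  have eq_if_le: "(f ^^ a) x = (f ^^ b) x"
    if "card V \<le> a" "a \<le> b" "a mod fact (card V) = b mod fact (card V)" for a b
  proof -
    have "fact (card V) dvd b - a"
      using mod_eq_dvd_iff_nat[OF that(2)] that(3)[symmetric] by blast
    then obtain c where "b - a = fact (card V) * c"
      by (rule dvdE)
    then have "b = a + (c * c0) * d"
      using that(2) c0 by (simp add: ac_simps)
    then show ?thesis
      using period[of a "c * c0"] that(1) ij(1,2) by simp
  qed
  show ?thesis
  proof (cases "k \<le> l")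
    case True
    then show ?thesis
      using eq_if_le kl by blast
  next
    case False
    then show ?thesis
      using eq_if_le[of l k] kl by simp
  qed
qed

locale walk_system =
  fixes E :: "(nat \<times> nat) set" and walk :: "nat \<times> nat \<Rightarrow> int \<Rightarrow> nat" and P m :: nat
  assumes finite_edges: "finite E" and period_pos: "0 < P"
    and walk_start: "\<And>e. e \<in> E \<Longrightarrow> walk e 0 = fst e \<and> walk e 1 = snd e"
    and walk_edge: "\<And>e n. e \<in> E \<Longrightarrow> (walk e n, walk e (n + 1)) \<in> E"
    and walk_periodic_ahead: "\<And>e a b. e \<in> E \<Longrightarrow> int m \<le> a \<Longrightarrow> int m \<le> b
      \<Longrightarrow> a mod int P = b mod int P \<Longrightarrow> walk e a = walk e b"
    and walk_periodic_behind: "\<And>e a b. e \<in> E \<Longrightarrow> a \<le> - int m \<Longrightarrow> b \<le> - int m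
      \<Longrightarrow> a mod int P = b mod int P \<Longrightarrow> walk e a = walk e b"

lemma nat_mod_eq_if_mod_eq:
  fixes x y :: int
  assumes "0 \<le> x" "0 \<le> y" "x mod int F = y mod int F"
  shows "nat x mod F = nat y mod F"
  using assms nat_mod_distrib[of x "int F"] nat_mod_distrib[of y "int F"] by simp

lemma walk_system_exists:
  fixes E :: "(nat \<times> nat) set"
  assumes V: "finite V" "E \<subseteq> V \<times> V"
    and out: "\<And>v. v \<in> V \<Longrightarrow> \<exists>w. (v, w) \<in> E" and inc: "\<And>w. w \<in> V \<Longrightarrow> \<exists>v. (v, w) \<in> E"
  shows "\<exists>walk. walk_system E walk (fact (card V)) (card V + 1)"
proof -
  obtain succ where succ: "\<And>v. v \<in> V \<Longrightarrow> (v, succ v) \<in> E"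
    using out by metis
  obtain pred where pred: "\<And>w. w \<in> V \<Longrightarrow> (pred w, w) \<in> E"
    using inc by metis
  have into_V: "succ ` V \<subseteq> V" "pred ` V \<subseteq> V"
    using succ pred V(2) by blast+
  have iterates: "(succ ^^ k) v \<in> V" "(pred ^^ k) v \<in> V" if "v \<in> V" for v k
    by (induction k) (use that into_V in auto)
  define walk where "walk e n = (if 1 \<le> n then (succ ^^ nat (n - 1)) (snd e) else (pred ^^ nat (- n)) (fst e))"
    for e :: "nat \<times> nat" and n :: int
  have "walk_system E walk (fact (card V)) (card V + 1)"
  proof
    show "finite E"
      using V finite_subset by blast
    show "0 < (fact (card V) :: nat)"
      by simp
  next
    fix e assume "e \<in> E"
    then show "walk e 0 = fst e \<and> walk e 1 = snd e"
      by (simp add: walk_def)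
  next
    fix e and n :: int assume e: "e \<in> E"
    then have ends: "fst e \<in> V" "snd e \<in> V"
      using V(2) by auto
    consider "1 \<le> n" | "n = 0" | "n \<le> -1"
      by linarith
    then show "(walk e n, walk e (n + 1)) \<in> E"
    proof cases
      case 1
      then have "nat n = Suc (nat (n - 1))"
        by simp
      then show ?thesis
        using 1 succ[OF iterates(1)[OF ends(2), of "nat (n - 1)"]] by (simp add: walk_def)
    next
      case 2
      then show ?thesis
        using e by (simp add: walk_def)
    next
      case 3
      then have "nat (- n) = Suc (nat (- (n + 1)))"
        by simp
      then show ?thesis
        using 3 pred[OF iterates(2)[OF ends(1), of "nat (- (n + 1))"]] by (simp add: walk_def)
    qed
  next
    fix e a b assume e: "e \<in> E" and ab: "int (card V + 1) \<le> a" "int (card V + 1) \<le> b"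
      "a mod int (fact (card V)) = b mod int (fact (card V))"
    have "(a - 1) mod int (fact (card V)) = (b - 1) mod int (fact (card V))"
      using ab(3) by (rule mod_diff_cong) simp
    then have "nat (a - 1) mod fact (card V) = nat (b - 1) mod fact (card V)"
      using ab by (intro nat_mod_eq_if_mod_eq) auto
    then have "(succ ^^ nat (a - 1)) (snd e) = (succ ^^ nat (b - 1)) (snd e)"
      using e V(2) ab(1,2) by (intro funpow_eq_if_mod_fact_eq[OF V(1) into_V(1)]) auto
    then show "walk e a = walk e b"
      using ab by (simp add: walk_def)
  next
    fix e a b assume e: "e \<in> E" and ab: "a \<le> - int (card V + 1)" "b \<le> - int (card V + 1)"
      "a mod int (fact (card V)) = b mod int (fact (card V))"
    have "(- a) mod int (fact (card V)) = (- b) mod int (fact (card V))"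
      using ab(3) by (rule mod_minus_cong)
    then have "nat (- a) mod fact (card V) = nat (- b) mod fact (card V)"
      using ab by (intro nat_mod_eq_if_mod_eq) auto
    then have "(pred ^^ nat (- a)) (fst e) = (pred ^^ nat (- b)) (fst e)"
      using e V(2) ab(1,2) by (intro funpow_eq_if_mod_fact_eq[OF V(1) into_V(2)]) auto
    then show "walk e a = walk e b"
      using ab by (simp add: walk_def)
  qed
  then show ?thesis
    by blast
qed

section \<open>A countable model system\<close>

definition edge_partition :: "'a::metric_space set \<Rightarrow> ('v \<times> 'v) set \<Rightarrow> ('v \<times> 'v \<Rightarrow> 'a set) \<Rightarrow> bool" where
  "edge_partition X E B \<longleftrightarrow> finite E \<and> (\<Union>e\<in>E. B e) = X \<and> (\<forall>e\<in>E. B e \<noteq> {} \<and> clopen_in X (B e))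
     \<and> (\<forall>e\<in>E. \<forall>e'\<in>E. e \<noteq> e' \<longrightarrow> B e \<inter> B e' = {})"

definition respects_transitions :: "('v \<times> 'v) set \<Rightarrow> ('v \<times> 'v \<Rightarrow> 'a set) \<Rightarrow> ('a \<Rightarrow> 'a) \<Rightarrow> bool" where
  "respects_transitions E B f \<longleftrightarrow>
     (\<forall>c d x. (c, d) \<in> E \<longrightarrow> x \<in> B (c, d) \<longrightarrow> (\<exists>d'. (d, d') \<in> E \<and> f x \<in> B (d, d')))"

text \<open>Its points are indexed by an edge \<open>e\<close> together with either a time
  \<open>n\<close> on a transient orbit, or a phase \<open>r < P\<close> on the cycle that orbit converges to in forward
  time, or on the cycle it converges to in backward time.\<close>
datatype phase = Transient int | Forward nat | Backward nat

instance phase :: countable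
  by countable_datatype

type_synonym model_index = "(nat \<times> nat) \<times> phase"

definition model_points :: "(nat \<times> nat) set \<Rightarrow> nat \<Rightarrow> model_index set" where
  "model_points E P = {(e, Transient n) | e n. e \<in> E} \<union> {(e, Forward r) | e r. e \<in> E \<and> r < P}
     \<union> {(e, Backward r) | e r. e \<in> E \<and> r < P}"

lemma model_points_simps [simp]:
  "(e, Transient n) \<in> model_points E P \<longleftrightarrow> e \<in> E"
  "(e, Forward r) \<in> model_points E P \<longleftrightarrow> e \<in> E \<and> r < P"
  "(e, Backward r) \<in> model_points E P \<longleftrightarrow> e \<in> E \<and> r < P"
  unfolding model_points_def by blast+

lemma model_points_cases:
  assumes "\<iota> \<in> model_points E P"
  obtains (Transient) e n where "\<iota> = (e, Transient n)" "e \<in> E"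
  | (Forward) e r where "\<iota> = (e, Forward r)" "e \<in> E" "r < P"
  | (Backward) e r where "\<iota> = (e, Backward r)" "e \<in> E" "r < P"
  using assms unfolding model_points_def by blast

fun model_shift :: "nat \<Rightarrow> model_index \<Rightarrow> model_index" where
  "model_shift P (e, Transient n) = (e, Transient (n + 1))"
| "model_shift P (e, Forward r) = (e, Forward (Suc r mod P))"
| "model_shift P (e, Backward r) = (e, Backward (Suc r mod P))"

lemma model_shift_in_points: "P > 0 \<Longrightarrow> \<iota> \<in> model_points E P \<Longrightarrow> model_shift P \<iota> \<in> model_points E P"
  by (erule model_points_cases) auto

lemma model_shift_funpow_Transient: "(model_shift P ^^ k) (e, Transient n) = (e, Transient (n + int k))"
  by (induction k) (auto simp: add.assoc)

lemma model_shift_funpow_Forward: "r < P \<Longrightarrow> (model_shift P ^^ k) (e, Forward r) = (e, Forward ((r + k) mod P))"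
  by (induction k) (auto simp: mod_Suc_eq)

lemma model_shift_funpow_Backward: "r < P \<Longrightarrow> (model_shift P ^^ k) (e, Backward r) = (e, Backward ((r + k) mod P))"
  by (induction k) (auto simp: mod_Suc_eq)

lemma Suc_mod_less: "r < P \<Longrightarrow> Suc r mod P = (if Suc r = P then 0 else Suc r)"
  by (simp add: Suc_lessI)

lemma model_shift_bij:
  assumes "P > 0"
  shows "bij_betw (model_shift P) (model_points E P) (model_points E P)"
proof (rule bij_betw_byWitness)
  define pred where "pred r = (if r = 0 then P - 1 else r - 1)" for r
  define unshift where "unshift \<iota> = (case \<iota> of (e, Transient n) \<Rightarrow> (e, Transient (n - 1))
    | (e, Forward r) \<Rightarrow> (e, Forward (pred r)) | (e, Backward r) \<Rightarrow> (e, Backward (pred r)))"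
    for \<iota> :: model_index
  have "pred (Suc r mod P) = r" "Suc (pred r) mod P = r" "pred r < P" if "r < P" for r
    using that assms by (auto simp: pred_def Suc_mod_less)
  then show "\<forall>\<iota>\<in>model_points E P. unshift (model_shift P \<iota>) = \<iota>"
    "\<forall>\<iota>\<in>model_points E P. model_shift P (unshift \<iota>) = \<iota>"
    "model_shift P ` model_points E P \<subseteq> model_points E P" "unshift ` model_points E P \<subseteq> model_points E P"
    using assms by (auto elim!: model_points_cases simp: unshift_def)
qed

definition height :: "int \<Rightarrow> real" where
  "height n = 2 powr n / (1 + 2 powr n)"

text \<open>Continuous on all of \<open>\<real>\<close>; it fixes \<open>0\<close> and \<open>1\<close> and moves \<open>height n\<close> to \<open>height (n + 1)\<close>.\<close>
definition height_step :: "real \<Rightarrow> real" where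
  "height_step t = 2 * t / (1 + \<bar>t\<bar>)"

lemma height_bounds: "0 < height n" "height n < 1"
proof -
  have "0 < (2::real) powr n" "0 < 1 + (2::real) powr n"
    by (simp_all add: add_pos_pos)
  then show "0 < height n" "height n < 1"
    unfolding height_def by (simp_all add: field_simps)
qed

lemma height_neq [simp]: "height n \<noteq> 0" "height n \<noteq> 1"
  using height_bounds[of n] by auto

lemma height_step_height: "height_step (height n) = height (n + 1)"
proof -
  define x :: real where "x = 2 powr n"
  have x: "0 < x" "1 + x \<noteq> 0" "1 + 2 * x \<noteq> 0"
    by (simp_all add: x_def add_pos_pos add_nonneg_eq_0_iff)
  have "\<bar>x / (1 + x)\<bar> = x / (1 + x)" "1 + x / (1 + x) = (1 + 2 * x) / (1 + x)"
    using x by (simp_all add: field_simps)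
  then have "height_step (height n) = (2 * x / (1 + x)) / ((1 + 2 * x) / (1 + x))"
    by (simp add: height_step_def height_def x_def)
  also have "\<dots> = 2 * x / (1 + 2 * x)"
    using x by simp
  also have "\<dots> = height (n + 1)"
    by (simp add: height_def x_def powr_add mult.commute)
  finally show ?thesis .
qed

lemma height_uminus: "height (- n) = 1 - height n"
proof -
  define x :: real where "x = 2 powr n"
  have x: "0 < x" "0 < 1 + x"
    by (simp_all add: x_def add_pos_pos)
  have "height (- n) = inverse x / (1 + inverse x)"
    by (simp add: height_def x_def powr_minus)
  also have "\<dots> = 1 - x / (1 + x)"
    using x by (simp add: field_simps)
  finally show ?thesis
    by (simp add: height_def x_def)
qed

lemma height_inj: "inj height"
proof (rule injI)
  fix n n' assume eq: "height n = height n'"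
  define x y :: real where "x = 2 powr n" and "y = 2 powr n'"
  have "0 < 1 + x" "0 < 1 + y"
    by (simp_all add: x_def y_def add_pos_pos)
  then have "x * (1 + y) = y * (1 + x)"
    using eq by (simp add: height_def x_def y_def field_simps)
  then have "(2::real) powr n = 2 powr n'"
    by (simp add: x_def y_def algebra_simps)
  then have "real_of_int n = real_of_int n'"
    by (simp add: powr_inj)
  then show "n = n'"
    by simp
qed

lemma height_tendsto_1:
  assumes "P > 0"
  shows "(\<lambda>k. height (a + int (k * P))) \<longlonglongrightarrow> 1"
proof -
  have "((\<lambda>x::real. 2 powr x / (1 + 2 powr x)) \<longlongrightarrow> 1) at_top"
    by real_asymp
  moreover have "filterlim (\<lambda>k. real_of_int a + real k * real P) at_top sequentially"
    using assms by (intro filterlim_tendsto_add_at_top[OF tendsto_const]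
        filterlim_at_top_mult_tendsto_pos[OF tendsto_const] filterlim_real_sequentially) auto
  ultimately show ?thesis
    unfolding height_def by (auto dest: filterlim_compose)
qed

lemma height_tendsto_0:
  assumes "P > 0"
  shows "(\<lambda>k. height (a - int (k * P))) \<longlonglongrightarrow> 0"
  using tendsto_diff[OF tendsto_const[of 1] height_tendsto_1[OF assms, of "- a"]]
  by (simp add: height_uminus[symmetric])

text \<open>On \<open>{0, \<dots>, P - 1}\<close> this is \<open>r \<mapsto> (r + 1) mod P\<close>; being piecewise linear it is continuous.\<close>
definition residue_step :: "nat \<Rightarrow> real \<Rightarrow> real" where
  "residue_step P x = min (x + 1) ((real P - 1) * (real P - 1 - x))"

lemma residue_step_int:
  assumes "0 \<le> r" "r < int P"
  shows "residue_step P (real_of_int r) = real_of_int ((r + 1) mod int P)"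
proof (cases "r + 1 < int P")
  case True
  have "real_of_int (r + 2) \<le> real_of_int (int P)"
    using True by (simp add: of_int_le_iff)
  then have r: "real_of_int r + 2 \<le> real P"
    by simp
  have "(real P - 1) * 1 \<le> (real P - 1) * (real P - 1 - real_of_int r)"
    using r assms by (intro mult_left_mono) linarith+
  then have "real P - 1 \<le> (real P - 1) * (real P - 1 - real_of_int r)"
    by simp
  then have "real_of_int r + 1 \<le> (real P - 1) * (real P - 1 - real_of_int r)"
    using r by linarith
  then show ?thesis
    using True assms by (simp add: residue_step_def min_def)
next
  case False
  then have "r + 1 = int P"
    using assms by simp
  then have "real_of_int (r + 1) = real_of_int (int P)"
    by (rule arg_cong)
  then have r: "real_of_int r = real P - 1"
    by simp
  have "residue_step P (real_of_int r) = 0"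
    unfolding residue_step_def r by (simp add: min_def)
  moreover have "(r + 1) mod int P = 0"
    using \<open>r + 1 = int P\<close> by simp
  ultimately show ?thesis
    by simp
qed

type_synonym model_space = "(real \<times> real) \<times> real \<times> real"

fun model_embed :: "nat \<Rightarrow> model_index \<Rightarrow> model_space" where
  "model_embed P (e, Transient n) = ((real (fst e), real (snd e)), real_of_int (n mod int P), height n)"
| "model_embed P (e, Forward r) = ((real (fst e), real (snd e)), real r, 1)"
| "model_embed P (e, Backward r) = ((real (fst e), real (snd e)), real r, 0)"

definition model_map :: "nat \<Rightarrow> model_space \<Rightarrow> model_space" where
  "model_map P y = (fst y, residue_step P (fst (snd y)), height_step (snd (snd y)))"

lemma continuous_on_model_map: "continuous_on S (model_map P)"
  unfolding model_map_def residue_step_def height_step_def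
  by (intro continuous_intros) (auto simp: add_pos_nonneg)

lemma residue_step_nat:
  assumes "r < P"
  shows "residue_step P (real r) = real (Suc r mod P)"
proof -
  have "(int r + 1) mod int P = int (Suc r mod P)"
    by (simp add: zmod_int add.commute)
  then show ?thesis
    using residue_step_int[of "int r" P] assms by simp
qed

lemma model_map_embed:
  assumes "P > 0" "\<iota> \<in> model_points E P"
  shows "model_map P (model_embed P \<iota>) = model_embed P (model_shift P \<iota>)"
  using assms(2)
proof (cases rule: model_points_cases)
  case (Transient e n)
  have "residue_step P (real_of_int (n mod int P)) = real_of_int ((n mod int P + 1) mod int P)"
    using assms(1) by (intro residue_step_int) auto
  then show ?thesis
    using Transient by (simp add: model_map_def height_step_height mod_add_left_eq)
next
  case (Forward e r)
  then show ?thesis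
    by (simp add: model_map_def height_step_def residue_step_nat)
next
  case (Backward e r)
  then show ?thesis
    by (simp add: model_map_def height_step_def residue_step_nat)
qed

lemma model_embed_inj: "inj (model_embed P)"
proof (rule injI)
  fix \<iota> \<kappa> assume eq: "model_embed P \<iota> = model_embed P \<kappa>"
  obtain e p e' p' where \<iota>: "\<iota> = (e, p)" and \<kappa>: "\<kappa> = (e', p')"
    by fastforce
  have "e = e'"
    using eq unfolding \<iota> \<kappa> by (cases p; cases p') (auto simp: prod_eq_iff)
  moreover have "p = p'"
    using eq unfolding \<iota> \<kappa>
    by (cases p; cases p') (auto simp: inj_eq[OF height_inj] dest: sym)
  ultimately show "\<iota> = \<kappa>"
    unfolding \<iota> \<kappa> by simp
qed

lemma model_map_funpow_embed:
  assumes "P > 0" "\<iota> \<in> model_points E P"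
  shows "(model_map P ^^ k) (model_embed P \<iota>) = model_embed P ((model_shift P ^^ k) \<iota>)"
    and "(model_shift P ^^ k) \<iota> \<in> model_points E P"
proof (induction k)
  case (Suc k)
  {
    case 1
    then show ?case
      using Suc(1,2) model_map_embed[OF assms(1)] by simp
  next
    case 2
    then show ?case
      using Suc(2) model_shift_in_points[OF assms(1)] by simp
  }
qed (use assms in simp_all)

lemma model_embed_tendsto_Forward:
  assumes "P > 0"
  shows "(\<lambda>k. model_embed P (e, Transient (a + int (k * P)))) \<longlonglongrightarrow> model_embed P (e, Forward (nat (a mod int P)))"
proof -
  have "model_embed P (e, Transient (a + int (k * P)))
      = ((real (fst e), real (snd e)), real_of_int (a mod int P), height (a + int (k * P)))" for k
    by (simp add: of_nat_mult)
  moreover have "model_embed P (e, Forward (nat (a mod int P))) = ((real (fst e), real (snd e)), real_of_int (a mod int P), 1)"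
    using assms by simp
  ultimately show ?thesis
    using height_tendsto_1[OF assms] by (simp add: tendsto_Pair)
qed

lemma mod_add_of_nat_mult: "(a + int (k * P)) mod int P = a mod int P"
  by (simp add: of_nat_mult)

lemma Suc_mod_int: "int (Suc r mod P) mod int P = (int r + 1) mod int P"
  by (simp add: zmod_int add.commute)

lemma mod_diff_of_nat_mult: "(a - int (k * P)) mod int P = a mod int P"
proof -
  have "a - int (k * P) = a + (- int k) * int P"
    by simp
  then show ?thesis
    by (simp only: mod_mult_self1)
qed

lemma model_embed_tendsto_Backward:
  assumes "P > 0"
  shows "(\<lambda>k. model_embed P (e, Transient (a - int (k * P)))) \<longlonglongrightarrow> model_embed P (e, Backward (nat (a mod int P)))"
proof -
  have "model_embed P (e, Transient (a - int (k * P)))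
      = ((real (fst e), real (snd e)), real_of_int (a mod int P), height (a - int (k * P)))" for k
    by (simp add: mod_diff_of_nat_mult del: of_nat_mult)
  moreover have "model_embed P (e, Backward (nat (a mod int P))) = ((real (fst e), real (snd e)), real_of_int (a mod int P), 0)"
    using assms by simp
  ultimately show ?thesis
    using height_tendsto_0[OF assms] by (simp add: tendsto_Pair)
qed

lemma int_decompose_above:
  assumes "P > 0" "int (K * P) \<le> n"
  obtains k where "n = int (nat (n mod int P)) + int ((K + k) * P)"
proof
  have "int (K * P) div int P \<le> n div int P"
    using assms(2) by (rule zdiv_mono1) (use assms(1) in simp)
  then have "int K \<le> n div int P"
    using assms(1) by (simp add: of_nat_mult)
  then have "int ((K + (nat (n div int P) - K)) * P) = n div int P * int P"
    by (simp add: of_nat_mult)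
  then show "n = int (nat (n mod int P)) + int ((K + (nat (n div int P) - K)) * P)"
    using assms(1) by simp
qed

lemma int_decompose_below:
  assumes "P > 0" "n \<le> - int (Suc K * P)"
  obtains k where "n = int (nat (n mod int P)) - int ((K + k) * P)"
proof
  have "n div int P \<le> (- int (Suc K * P)) div int P"
    using assms(2) by (rule zdiv_mono1) (use assms(1) in simp)
  also have "(- int (Suc K * P)) div int P = - int (Suc K)"
    using assms(1) nonzero_mult_div_cancel_right[of "int P" "- int (Suc K)"]
    by (simp only: of_nat_mult mult_minus_left)
  finally have "int K \<le> - (n div int P)"
    by simp
  then have "int ((K + (nat (- (n div int P)) - K)) * P) = - (n div int P) * int P"
    by (simp add: of_nat_mult)
  then show "n = int (nat (n mod int P)) - int ((K + (nat (- (n div int P)) - K)) * P)"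
    using assms(1) by simp
qed

lemma compact_model_embed_saturated:
  assumes P: "P > 0" and E: "finite E" and F: "F \<subseteq> model_points E P"
    and up: "\<And>e r k. e \<in> E \<Longrightarrow> r < P \<Longrightarrow>
      (e, Transient (int r + int ((K + k) * P))) \<in> F \<longleftrightarrow> (e, Forward r) \<in> F"
    and down: "\<And>e r k. e \<in> E \<Longrightarrow> r < P \<Longrightarrow>
      (e, Transient (int r - int ((K + k) * P))) \<in> F \<longleftrightarrow> (e, Backward r) \<in> F"
  shows "compact (model_embed P ` F)"
proof -
  define up_tail where "up_tail e r = insert (e, Forward r) (range (\<lambda>k. (e, Transient (int r + int ((K + k) * P)))))"
    for e :: "nat \<times> nat" and r :: nat
  define down_tail where "down_tail e r = insert (e, Backward r) (range (\<lambda>k. (e, Transient (int r - int ((K + k) * P)))))"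
    for e :: "nat \<times> nat" and r :: nat
  define middle where "middle = (\<lambda>(e, n). (e, Transient n)) ` (E \<times> {- int (Suc K * P) <..< int (K * P)})"
  define I_up where "I_up = {(e, r). e \<in> E \<and> r < P \<and> (e, Forward r) \<in> F}"
  define I_down where "I_down = {(e, r). e \<in> E \<and> r < P \<and> (e, Backward r) \<in> F}"
  have compact_up: "compact (model_embed P ` up_tail e r)" if "r < P" for e r
  proof -
    have "nat ((int r + int (K * P)) mod int P) = r"
      using that by (simp add: of_nat_mult)
    then have "(\<lambda>k. model_embed P (e, Transient (int r + int ((K + k) * P)))) \<longlonglongrightarrow> model_embed P (e, Forward r)"
      using model_embed_tendsto_Forward[OF P, of e "int r + int (K * P)"] by (simp add: algebra_simps)
    then show ?thesis
      unfolding up_tail_def image_insert image_image by (rule compact_sequence_with_limit)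
  qed
  have compact_down: "compact (model_embed P ` down_tail e r)" if "r < P" for e r
  proof -
    have "(int r - int (K * P)) mod int P = int r mod int P"
      by (rule mod_diff_of_nat_mult)
    then have "nat ((int r - int (K * P)) mod int P) = r"
      using that by simp
    then have "(\<lambda>k. model_embed P (e, Transient (int r - int ((K + k) * P)))) \<longlonglongrightarrow> model_embed P (e, Backward r)"
      using model_embed_tendsto_Backward[OF P, of e "int r - int (K * P)"] by (simp add: algebra_simps)
    then show ?thesis
      unfolding down_tail_def image_insert image_image by (rule compact_sequence_with_limit)
  qed
  have "finite I_up" "finite I_down"
    using E by (auto intro: finite_subset[of _ "E \<times> {..<P}"] simp: I_up_def I_down_def)
  have "finite middle"
    using E by (simp add: middle_def)
  have F_eq: "F = (F \<inter> middle) \<union> (\<Union>(e, r)\<in>I_up. up_tail e r) \<union> (\<Union>(e, r)\<in>I_down. down_tail e r)"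
  proof (intro equalityI subsetI)
    fix \<iota> assume "\<iota> \<in> F"
    then have "\<iota> \<in> model_points E P"
      using F by blast
    then show "\<iota> \<in> (F \<inter> middle) \<union> (\<Union>(e, r)\<in>I_up. up_tail e r) \<union> (\<Union>(e, r)\<in>I_down. down_tail e r)"
    proof (cases rule: model_points_cases)
      case (Transient e n)
      consider "int (K * P) \<le> n" | "n \<le> - int (Suc K * P)" | "- int (Suc K * P) < n \<and> n < int (K * P)"
        by linarith
      then show ?thesis
      proof cases
        case 1
        define r where "r = nat (n mod int P)"
        obtain k where k: "n = int r + int ((K + k) * P)"
          using int_decompose_above[OF P 1] unfolding r_def by blast
        have r: "r < P"
          using P by (simp add: r_def nat_less_iff)
        have "(e, Forward r) \<in> F"
          using up[OF Transient(2) r, of k] \<open>\<iota> \<in> F\<close> Transient(1) unfolding k[symmetric] by simp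
        then have "(e, r) \<in> I_up" "\<iota> \<in> up_tail e r"
          using Transient r k by (auto simp: I_up_def up_tail_def)
        then show ?thesis
          by blast
      next
        case 2
        define r where "r = nat (n mod int P)"
        obtain k where k: "n = int r - int ((K + k) * P)"
          using int_decompose_below[OF P 2] unfolding r_def by blast
        have r: "r < P"
          using P by (simp add: r_def nat_less_iff)
        have "(e, Backward r) \<in> F"
          using down[OF Transient(2) r, of k] \<open>\<iota> \<in> F\<close> Transient(1) unfolding k[symmetric] by simp
        then have "(e, r) \<in> I_down" "\<iota> \<in> down_tail e r"
          using Transient r k by (auto simp: I_down_def down_tail_def)
        then show ?thesis
          by blast
      next
        case 3
        then show ?thesis
          using \<open>\<iota> \<in> F\<close> Transient by (auto simp: middle_def)
      qed
    next
      case (Forward e r)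
      then have "(e, r) \<in> I_up" "\<iota> \<in> up_tail e r"
        using \<open>\<iota> \<in> F\<close> by (auto simp: I_up_def up_tail_def)
      then show ?thesis
        by blast
    next
      case (Backward e r)
      then have "(e, r) \<in> I_down" "\<iota> \<in> down_tail e r"
        using \<open>\<iota> \<in> F\<close> by (auto simp: I_down_def down_tail_def)
      then show ?thesis
        by blast
    qed
  next
    fix \<iota> assume "\<iota> \<in> (F \<inter> middle) \<union> (\<Union>(e, r)\<in>I_up. up_tail e r) \<union> (\<Union>(e, r)\<in>I_down. down_tail e r)"
    then show "\<iota> \<in> F"
      using up down by (auto simp: I_up_def I_down_def up_tail_def down_tail_def)
  qed
  have "model_embed P ` F = model_embed P ` (F \<inter> middle) \<union> (\<Union>(e, r)\<in>I_up. model_embed P ` up_tail e r)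
      \<union> (\<Union>(e, r)\<in>I_down. model_embed P ` down_tail e r)"
    using arg_cong[OF F_eq, of "image (model_embed P)"] by (simp add: image_Un image_UN case_prod_unfold)
  moreover have "compact (model_embed P ` (F \<inter> middle))"
    using \<open>finite middle\<close> by (intro finite_imp_compact) simp
  moreover have "compact (\<Union>(e, r)\<in>I_up. model_embed P ` up_tail e r)"
    using \<open>finite I_up\<close> compact_up by (intro compact_UN) (auto simp: I_up_def)
  moreover have "compact (\<Union>(e, r)\<in>I_down. model_embed P ` down_tail e r)"
    using \<open>finite I_down\<close> compact_down by (intro compact_UN) (auto simp: I_down_def)
  ultimately show ?thesis
    by (simp add: compact_Un)
qed

context walk_system
begin

text \<open>Points of the limit cycles get the colours that the walk eventually repeats; the offset
  \<open>Suc m * P\<close> moves them into the periodic range of the walk.\<close>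
fun colour :: "model_index \<Rightarrow> nat" where
  "colour (e, Transient n) = walk e n"
| "colour (e, Forward r) = walk e (int r + int (Suc m * P))"
| "colour (e, Backward r) = walk e (int r - int (Suc m * P))"

lemma period_offset: "m + P \<le> Suc m * P"
proof -
  have "m * 1 \<le> m * P"
    using period_pos by (intro mult_le_mono2) simp
  then show ?thesis
    by simp
qed

lemma colour_Forward_tail:
  assumes "e \<in> E" "r < P"
  shows "colour (e, Transient (int r + int ((Suc m + k) * P))) = colour (e, Forward r)
    \<and> colour (model_shift P (e, Transient (int r + int ((Suc m + k) * P)))) = colour (model_shift P (e, Forward r))"
proof
  have "m \<le> Suc m * P" "Suc m * P \<le> (Suc m + k) * P"
    by (rule le_trans[OF le_add1 period_offset]) simp
  then have bounds: "int m \<le> int (Suc m * P)" "int (Suc m * P) \<le> int ((Suc m + k) * P)"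
    by (simp_all only: of_nat_le_iff)
  show "colour (e, Transient (int r + int ((Suc m + k) * P))) = colour (e, Forward r)"
    unfolding colour.simps
  proof (intro walk_periodic_ahead[OF assms(1)])
    show "int m \<le> int r + int ((Suc m + k) * P)" "int m \<le> int r + int (Suc m * P)"
      using bounds by linarith+
  qed (simp only: mod_add_of_nat_mult)
  have "int r + int ((Suc m + k) * P) + 1 = (int r + 1) + int ((Suc m + k) * P)"
    by linarith
  then have "walk e (int r + int ((Suc m + k) * P) + 1) = walk e (int (Suc r mod P) + int (Suc m * P))"
  proof (intro walk_periodic_ahead[OF assms(1)])
    show "int m \<le> int r + int ((Suc m + k) * P) + 1" "int m \<le> int (Suc r mod P) + int (Suc m * P)"
      using bounds by linarith+
  qed (simp only: mod_add_of_nat_mult Suc_mod_int)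
  then show "colour (model_shift P (e, Transient (int r + int ((Suc m + k) * P))))
      = colour (model_shift P (e, Forward r))"
    by simp
qed

lemma colour_Backward_tail:
  assumes "e \<in> E" "r < P"
  shows "colour (e, Transient (int r - int ((Suc m + k) * P))) = colour (e, Backward r)
    \<and> colour (model_shift P (e, Transient (int r - int ((Suc m + k) * P)))) = colour (model_shift P (e, Backward r))"
proof
  have "m + P \<le> Suc m * P" "Suc m * P \<le> (Suc m + k) * P"
    using period_offset by simp_all
  then have bounds: "int r < int P" "int (Suc r mod P) < int P" "int m + int P \<le> int (Suc m * P)"
    "int (Suc m * P) \<le> int ((Suc m + k) * P)"
    using assms(2) period_pos by (simp_all only: of_nat_less_iff of_nat_le_iff mod_less_divisor flip: of_nat_add)
  show "colour (e, Transient (int r - int ((Suc m + k) * P))) = colour (e, Backward r)"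
    unfolding colour.simps
  proof (intro walk_periodic_behind[OF assms(1)])
    show "int r - int ((Suc m + k) * P) \<le> - int m" "int r - int (Suc m * P) \<le> - int m"
      using bounds by linarith+
  qed (simp only: mod_diff_of_nat_mult)
  have "int r - int ((Suc m + k) * P) + 1 = (int r + 1) - int ((Suc m + k) * P)"
    by linarith
  then have "walk e (int r - int ((Suc m + k) * P) + 1) = walk e (int (Suc r mod P) - int (Suc m * P))"
  proof (intro walk_periodic_behind[OF assms(1)])
    show "int r - int ((Suc m + k) * P) + 1 \<le> - int m" "int (Suc r mod P) - int (Suc m * P) \<le> - int m"
      using bounds by linarith+
  qed (simp only: mod_diff_of_nat_mult Suc_mod_int)
  then show "colour (model_shift P (e, Transient (int r - int ((Suc m + k) * P))))
      = colour (model_shift P (e, Backward r))"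
    by simp
qed

lemma colour_edge:
  assumes "\<iota> \<in> model_points E P"
  shows "(colour \<iota>, colour (model_shift P \<iota>)) \<in> E"
  using assms
proof (cases rule: model_points_cases)
  case (Transient e n)
  then show ?thesis
    using walk_edge by simp
next
  case (Forward e r)
  then show ?thesis
    using colour_Forward_tail[OF Forward(2,3), of 0] walk_edge[OF Forward(2), of "int r + int (Suc m * P)"]
    by simp
next
  case (Backward e r)
  then show ?thesis
    using colour_Backward_tail[OF Backward(2,3), of 0] walk_edge[OF Backward(2), of "int r - int (Suc m * P)"]
    by simp
qed

definition edge_class :: "nat \<times> nat \<Rightarrow> model_index set" where
  "edge_class e = {\<iota> \<in> model_points E P. (colour \<iota>, colour (model_shift P \<iota>)) = e}"

lemma compact_edge_class: "compact (model_embed P ` edge_class e)"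
proof (rule compact_model_embed_saturated[OF period_pos finite_edges, where K = "Suc m"])
  show "edge_class e \<subseteq> model_points E P"
    by (auto simp: edge_class_def)
next
  fix e' r k assume e': "e' \<in> E" and r: "r < P"
  show "(e', Transient (int r + int ((Suc m + k) * P))) \<in> edge_class e \<longleftrightarrow> (e', Forward r) \<in> edge_class e"
    using colour_Forward_tail[OF e' r, of k] e' r unfolding edge_class_def by simp
  show "(e', Transient (int r - int ((Suc m + k) * P))) \<in> edge_class e \<longleftrightarrow> (e', Backward r) \<in> edge_class e"
    using colour_Backward_tail[OF e' r, of k] e' r unfolding edge_class_def by simp
qed

lemma Transient_in_edge_class: "e \<in> E \<Longrightarrow> (e, Transient 0) \<in> edge_class e"
  using walk_start[of e] by (auto simp: edge_class_def)

end

lemma model_map_bij: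
  assumes "P > 0"
  shows "model_map P ` model_embed P ` model_points E P = model_embed P ` model_points E P"
    and "inj_on (model_map P) (model_embed P ` model_points E P)"
proof -
  have shift: "model_shift P ` model_points E P = model_points E P" "inj_on (model_shift P) (model_points E P)"
    using model_shift_bij[OF assms, of E] by (auto simp: bij_betw_def)
  have "model_map P ` model_embed P ` model_points E P = model_embed P ` model_shift P ` model_points E P"
    using model_map_embed[OF assms] by (force simp: image_image)
  then show "model_map P ` model_embed P ` model_points E P = model_embed P ` model_points E P"
    using shift(1) by simp
  show "inj_on (model_map P) (model_embed P ` model_points E P)"
  proof (rule inj_onI)
    fix y y' assume "y \<in> model_embed P ` model_points E P" "y' \<in> model_embed P ` model_points E P"
      and eq: "model_map P y = model_map P y'"
    then obtain \<iota> \<kappa> where \<iota>: "\<iota> \<in> model_points E P" "y = model_embed P \<iota>"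
      and \<kappa>: "\<kappa> \<in> model_points E P" "y' = model_embed P \<kappa>"
      by blast
    then have "model_shift P \<iota> = model_shift P \<kappa>"
      using eq model_map_embed[OF assms] model_embed_inj by (metis injD)
    then show "y = y'"
      using \<iota> \<kappa> shift(2) by (simp add: inj_on_eq_iff)
  qed
qed

lemma model_map_asymptotically_periodic:
  assumes P: "P > 0" and \<iota>: "\<iota> \<in> model_points E P"
  shows "asymptotically_periodic (model_map P) (model_embed P \<iota>)"
  using \<iota>
proof (cases rule: model_points_cases)
  case (Transient e n)
  define q where "q = model_embed P (e, Forward (nat (n mod int P)))"
  have "nat (n mod int P) < P"
    using P by (simp add: nat_less_iff)
  then have cycle_point: "(e, Forward (nat (n mod int P))) \<in> model_points E P"
    using Transient(2) by simp
  have "(model_map P ^^ P) q = q"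
    using model_map_funpow_embed(1)[OF P cycle_point, of P] \<open>nat (n mod int P) < P\<close>
    by (simp add: q_def model_shift_funpow_Forward)
  moreover have "(\<lambda>k. (model_map P ^^ (k * P)) (model_embed P \<iota>)) \<longlonglongrightarrow> q"
    using model_embed_tendsto_Forward[OF P, of e n] model_map_funpow_embed(1)[OF P \<iota>]
    by (simp add: Transient(1) q_def model_shift_funpow_Transient)
  ultimately show ?thesis
    unfolding asymptotically_periodic_def using P by blast
next
  case (Forward e r)
  then have "(model_map P ^^ P) (model_embed P \<iota>) = model_embed P \<iota>"
    using model_map_funpow_embed(1)[OF P \<iota>] by (simp add: model_shift_funpow_Forward)
  then have "(model_map P ^^ (k * P)) (model_embed P \<iota>) = model_embed P \<iota>" for k
    using funpow_mult_add_periodic[where f = "model_map P" and P = P and k = k and r = 0] by simp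
  then show ?thesis
    unfolding asymptotically_periodic_def using P \<open>(model_map P ^^ P) (model_embed P \<iota>) = model_embed P \<iota>\<close>
    by (intro exI[of _ "model_embed P \<iota>"] exI[of _ P]) simp
next
  case (Backward e r)
  then have "(model_map P ^^ P) (model_embed P \<iota>) = model_embed P \<iota>"
    using model_map_funpow_embed(1)[OF P \<iota>] by (simp add: model_shift_funpow_Backward)
  then have "(model_map P ^^ (k * P)) (model_embed P \<iota>) = model_embed P \<iota>" for k
    using funpow_mult_add_periodic[where f = "model_map P" and P = P and k = k and r = 0] by simp
  then show ?thesis
    unfolding asymptotically_periodic_def using P \<open>(model_map P ^^ P) (model_embed P \<iota>) = model_embed P \<iota>\<close>
    by (intro exI[of _ "model_embed P \<iota>"] exI[of _ P]) simp
qed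

theorem (in walk_system) model_system_exists:
  obtains Y :: "model_space set" and \<sigma> \<sigma>' B where "compact Y" "countable Y" "homeomorphism Y Y \<sigma> \<sigma>'"
    "edge_partition Y E B" "respects_transitions E B \<sigma>" "\<And>y. y \<in> Y \<Longrightarrow> asymptotically_periodic \<sigma> y"
proof -
  define Y where "Y = model_embed P ` model_points E P"
  define B where "B e = model_embed P ` edge_class e" for e
  have "model_points E P = (\<Union>e\<in>E. edge_class e)"
    using colour_edge by (auto simp: edge_class_def)
  then have Y: "Y = (\<Union>e\<in>E. B e)"
    by (simp add: Y_def B_def image_UN)
  then have compact: "compact Y"
    using finite_edges compact_edge_class by (auto simp: B_def intro!: compact_UN)
  have countable: "countable Y"
    by (simp add: Y_def)
  have "model_map P ` Y = Y" "inj_on (model_map P) Y"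
    using model_map_bij[OF period_pos] by (simp_all add: Y_def)
  then obtain \<sigma>' where homeomorphism: "homeomorphism Y Y (model_map P) \<sigma>'"
    using homeomorphism_compact[OF compact continuous_on_model_map] by blast
  have disjoint: "B e \<inter> B e' = {}" if "e \<noteq> e'" for e e'
    using that inj_eq[OF model_embed_inj] by (auto simp: B_def edge_class_def)
  have partition: "edge_partition Y E B"
    unfolding edge_partition_def
  proof (intro conjI ballI impI)
    show "finite E" "(\<Union>e\<in>E. B e) = Y"
      using finite_edges Y by simp_all
    fix e assume "e \<in> E"
    show "B e \<noteq> {}"
      using Transient_in_edge_class[OF \<open>e \<in> E\<close>] by (auto simp: B_def)
    show "clopen_in Y (B e)"
      using compact_edge_class disjoint
      by (intro clopen_in_finite_partition[OF finite_edges _ _ Y \<open>e \<in> E\<close>]) (auto simp: B_def)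
  qed (rule disjoint)
  have respects: "respects_transitions E B (model_map P)"
    unfolding respects_transitions_def
  proof (intro allI impI)
    fix c d y assume "(c, d) \<in> E" "y \<in> B (c, d)"
    then obtain \<iota> where \<iota>: "\<iota> \<in> edge_class (c, d)" "y = model_embed P \<iota>"
      by (auto simp: B_def)
    then have \<iota>_point: "\<iota> \<in> model_points E P" and colour_d: "colour (model_shift P \<iota>) = d"
      by (auto simp: edge_class_def)
    then have shift_point: "model_shift P \<iota> \<in> model_points E P"
      using model_shift_in_points[OF period_pos] by blast
    define d' where "d' = colour (model_shift P (model_shift P \<iota>))"
    have "(d, d') \<in> E"
      using colour_edge[OF shift_point] colour_d by (simp add: d'_def)
    moreover have "model_shift P \<iota> \<in> edge_class (d, d')"
      using shift_point colour_d by (simp add: edge_class_def d'_def)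
    moreover have "model_map P y = model_embed P (model_shift P \<iota>)"
      using \<iota>(2) model_map_embed[OF period_pos \<iota>_point] by simp
    ultimately show "\<exists>d'. (d, d') \<in> E \<and> model_map P y \<in> B (d, d')"
      by (auto simp: B_def)
  qed
  have "\<And>y. y \<in> Y \<Longrightarrow> asymptotically_periodic (model_map P) y"
    using model_map_asymptotically_periodic[OF period_pos] by (auto simp: Y_def)
  then show ?thesis
    by (rule that[OF compact countable homeomorphism partition respects])
qed

section \<open>Realising a transition graph on a Cantor set\<close>

lemma cantor_set_Times:
  fixes Y :: "'b::metric_space set" and K :: "'a::metric_space set"
  assumes Y: "compact Y" "countable Y" "Y \<noteq> {}" and K: "cantor_set K"
  shows "cantor_set (Y \<times> K)"
  unfolding cantor_set_iff
proof (intro conjI ballI)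
  show "Y \<times> K \<noteq> {}" "compact (Y \<times> K)"
    using Y cantor_setD(1,2)[OF K] by (simp_all add: compact_Times)
next
  fix p assume "p \<in> Y \<times> K"
  then obtain y z where p: "p = (y, z)" "y \<in> Y" "z \<in> K"
    by blast
  show "p islimpt Y \<times> K"
    unfolding islimpt_approachable
  proof (intro allI impI)
    fix e :: real assume "e > 0"
    then obtain z' where "z' \<in> K" "z' \<noteq> z" "dist z' z < e"
      using cantor_setD(3)[OF K p(3)] by (auto simp: islimpt_approachable)
    then show "\<exists>p'\<in>Y \<times> K. p' \<noteq> p \<and> dist p' p < e"
      using p by (intro bexI[of _ "(y, z')"]) (auto simp: dist_Pair_Pair)
  qed
next
  show "totally_disconnected (Y \<times> K)"
    unfolding totally_disconnected_def
  proof (intro allI impI)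
    fix C assume C: "C \<subseteq> Y \<times> K \<and> connected C"
    then have "connected (fst ` C)" "connected (snd ` C)"
      by (auto intro!: connected_continuous_image continuous_intros)
    moreover have "fst ` C \<subseteq> Y" "snd ` C \<subseteq> K"
      using C by auto
    moreover have "\<exists>a. fst ` C \<subseteq> {a}"
    proof (rule ccontr)
      assume "\<nexists>a. fst ` C \<subseteq> {a}"
      then obtain a b where "a \<in> fst ` C" "b \<in> fst ` C" "a \<noteq> b"
        by blast
      then have "uncountable (fst ` C)"
        using connected_uncountable \<open>connected (fst ` C)\<close> by blast
      then show False
        using countable_subset[OF \<open>fst ` C \<subseteq> Y\<close> Y(2)] by blast
    qed
    moreover have "\<exists>b. snd ` C \<subseteq> {b}"
      using cantor_setD(4)[OF K] calculation unfolding totally_disconnected_def by blast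
    ultimately obtain a b where "fst ` C \<subseteq> {a}" "snd ` C \<subseteq> {b}"
      by blast
    then have "C \<subseteq> {(a, b)}"
      by force
    then show "\<exists>p. C \<subseteq> {p}"
      by blast
  qed
qed

lemma edge_partition_Times:
  assumes "edge_partition Y E B" "compact K" "K \<noteq> {}"
  shows "edge_partition (Y \<times> K) E (\<lambda>e. B e \<times> K)"
  unfolding edge_partition_def
proof (intro conjI ballI impI)
  show "finite E" "(\<Union>e\<in>E. B e \<times> K) = Y \<times> K"
    using assms(1) unfolding edge_partition_def by auto
next
  fix e assume "e \<in> E"
  then have "B e \<noteq> {}" "clopen_in Y (B e)"
    using assms(1) unfolding edge_partition_def by auto
  moreover have "Y \<times> K - B e \<times> K = (Y - B e) \<times> K"
    by blast
  ultimately show "B e \<times> K \<noteq> {}" "clopen_in (Y \<times> K) (B e \<times> K)"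
    using assms(2,3) by (auto simp: clopen_in_def compact_Times)
next
  fix e e' assume "e \<in> E" "e' \<in> E" "e \<noteq> e'"
  then show "B e \<times> K \<inter> B e' \<times> K = {}"
    using assms(1) unfolding edge_partition_def by blast
qed

lemma respects_transitions_Times:
  "respects_transitions E B \<sigma> \<Longrightarrow> respects_transitions E (\<lambda>e. B e \<times> K) (\<lambda>p. (\<sigma> (fst p), snd p))"
  unfolding respects_transitions_def by fastforce

lemma funpow_Times_id:
  fixes \<sigma> :: "'a \<Rightarrow> 'a" and p :: "'a \<times> 'b"
  shows "((\<lambda>p. (\<sigma> (fst p), snd p)) ^^ n) p = ((\<sigma> ^^ n) (fst p), snd p)"
  by (induction n) auto

lemma asymptotically_periodic_Times:
  assumes "asymptotically_periodic \<sigma> y"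
  shows "asymptotically_periodic (\<lambda>p. (\<sigma> (fst p), snd p)) (y, z)"
proof -
  obtain q P where "P > 0" "(\<sigma> ^^ P) q = q" "(\<lambda>k. (\<sigma> ^^ (k * P)) y) \<longlonglongrightarrow> q"
    using assms unfolding asymptotically_periodic_def by blast
  then show ?thesis
    unfolding asymptotically_periodic_def funpow_Times_id
    by (intro exI[of _ "(q, z)"] exI[of _ P]) (simp add: tendsto_Pair)
qed

lemma continuous_on_Times_id:
  assumes "continuous_on Y \<sigma>"
  shows "continuous_on (Y \<times> K) (\<lambda>p. (\<sigma> (fst p), snd p))"
proof (rule continuous_on_Pair)
  show "continuous_on (Y \<times> K) (\<lambda>p. \<sigma> (fst p))"
    by (rule continuous_on_compose2[OF assms continuous_on_fst[OF continuous_on_id]]) auto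
qed (rule continuous_on_snd[OF continuous_on_id])

lemma homeomorphism_Times_id:
  assumes "homeomorphism Y Y \<sigma> \<sigma>'"
  shows "homeomorphism (Y \<times> K) (Y \<times> K) (\<lambda>p. (\<sigma> (fst p), snd p)) (\<lambda>p. (\<sigma>' (fst p), snd p))"
proof (rule homeomorphismI)
  have "continuous_on Y \<sigma>" "continuous_on Y \<sigma>'"
    using assms by (simp_all add: homeomorphism_def)
  then show "continuous_on (Y \<times> K) (\<lambda>p. (\<sigma> (fst p), snd p))"
    "continuous_on (Y \<times> K) (\<lambda>p. (\<sigma>' (fst p), snd p))"
    by (simp_all add: continuous_on_Times_id)
  have "\<sigma> ` Y \<subseteq> Y" "\<sigma>' ` Y \<subseteq> Y" "\<And>y. y \<in> Y \<Longrightarrow> \<sigma>' (\<sigma> y) = y" "\<And>y. y \<in> Y \<Longrightarrow> \<sigma> (\<sigma>' y) = y"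
    using assms by (simp_all add: homeomorphism_def)
  then show "(\<lambda>p. (\<sigma> (fst p), snd p)) ` (Y \<times> K) \<subseteq> Y \<times> K" "(\<lambda>p. (\<sigma>' (fst p), snd p)) ` (Y \<times> K) \<subseteq> Y \<times> K"
    "\<And>p. p \<in> Y \<times> K \<Longrightarrow> (\<sigma>' (fst (\<sigma> (fst p), snd p)), snd (\<sigma> (fst p), snd p)) = p"
    "\<And>p. p \<in> Y \<times> K \<Longrightarrow> (\<sigma> (fst (\<sigma>' (fst p), snd p)), snd (\<sigma>' (fst p), snd p)) = p"
    by auto
qed

lemma matched_partition_of_edge_partitions:
  assumes "edge_partition X E A" "edge_partition Y E B"
  shows "matched_partition X Y ((\<lambda>e. (A e, B e)) ` E)"
  unfolding matched_partition_def
proof (intro conjI)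
  show "finite ((\<lambda>e. (A e, B e)) ` E)"
    using assms(1) unfolding edge_partition_def by simp
  show "\<Union>(fst ` (\<lambda>e. (A e, B e)) ` E) = X" "\<Union>(snd ` (\<lambda>e. (A e, B e)) ` E) = Y"
    using assms unfolding edge_partition_def by (simp_all add: image_image)
  show "\<forall>p\<in>(\<lambda>e. (A e, B e)) ` E. fst p \<noteq> {} \<and> snd p \<noteq> {} \<and> clopen_in X (fst p) \<and> clopen_in Y (snd p)"
  proof
    fix p assume "p \<in> (\<lambda>e. (A e, B e)) ` E"
    then obtain e where "e \<in> E" "p = (A e, B e)"
      by blast
    then show "fst p \<noteq> {} \<and> snd p \<noteq> {} \<and> clopen_in X (fst p) \<and> clopen_in Y (snd p)"
      using assms unfolding edge_partition_def by simp
  qed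
  show "\<forall>p\<in>(\<lambda>e. (A e, B e)) ` E. \<forall>q\<in>(\<lambda>e. (A e, B e)) ` E. p \<noteq> q \<longrightarrow> fst p \<inter> fst q = {} \<and> snd p \<inter> snd q = {}"
  proof (intro ballI impI)
    fix p q assume "p \<in> (\<lambda>e. (A e, B e)) ` E" "q \<in> (\<lambda>e. (A e, B e)) ` E" "p \<noteq> q"
    then obtain e e' where "e \<in> E" "e' \<in> E" "e \<noteq> e'" "p = (A e, B e)" "q = (A e', B e')"
      by blast
    then show "fst p \<inter> fst q = {} \<and> snd p \<inter> snd q = {}"
      using assms unfolding edge_partition_def by simp
  qed
qed

lemma conjugate_model_system:
  fixes K :: "'a::metric_space set" and M :: "'b::metric_space set"
  assumes hg: "homeomorphism K M h g" and hA: "\<And>e. e \<in> E \<Longrightarrow> h ` A e = B e"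
    and A: "edge_partition K E A" and \<sigma>: "homeomorphism M M \<sigma> \<sigma>'" and B: "respects_transitions E B \<sigma>"
    and per: "\<And>y. y \<in> M \<Longrightarrow> asymptotically_periodic \<sigma> y" and "compact M"
  shows "homeomorphism K K (g \<circ> \<sigma> \<circ> h) (g \<circ> \<sigma>' \<circ> h)"
    and "respects_transitions E A (g \<circ> \<sigma> \<circ> h)"
    and "\<And>x. x \<in> K \<Longrightarrow> asymptotically_periodic (g \<circ> \<sigma> \<circ> h) x"
proof -
  have h: "\<And>x. x \<in> K \<Longrightarrow> h x \<in> M" "\<And>x. x \<in> K \<Longrightarrow> g (h x) = x"
    and g: "\<And>y. y \<in> M \<Longrightarrow> g y \<in> K" "\<And>y. y \<in> M \<Longrightarrow> h (g y) = y" "continuous_on M g"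
    using hg by (auto simp: homeomorphism_def)
  have \<sigma>M: "\<And>y. y \<in> M \<Longrightarrow> \<sigma> y \<in> M"
    using \<sigma> by (auto simp: homeomorphism_def)
  show "homeomorphism K K (g \<circ> \<sigma> \<circ> h) (g \<circ> \<sigma>' \<circ> h)"
    using homeomorphism_compose[OF homeomorphism_compose[OF hg \<sigma>] homeomorphism_symD[OF hg]]
    by (simp add: comp_assoc)
  have gB: "g ` B e = A e" if "e \<in> E" for e
  proof -
    have "A e \<subseteq> K"
      using A that unfolding edge_partition_def by blast
    have "g ` B e = (\<lambda>x. g (h x)) ` A e"
      unfolding hA[OF that, symmetric] by (rule image_image)
    also have "\<dots> = A e"
      using \<open>A e \<subseteq> K\<close> h(2) by (simp add: subset_iff)
    finally show ?thesis .
  qed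
  show "respects_transitions E A (g \<circ> \<sigma> \<circ> h)"
    unfolding respects_transitions_def
  proof (intro allI impI)
    fix c d x assume "(c, d) \<in> E" "x \<in> A (c, d)"
    then have "h x \<in> B (c, d)"
      using hA by blast
    then obtain d' where "(d, d') \<in> E" "\<sigma> (h x) \<in> B (d, d')"
      using B \<open>(c, d) \<in> E\<close> unfolding respects_transitions_def by blast
    moreover have "g (\<sigma> (h x)) \<in> A (d, d')"
      using gB[OF \<open>(d, d') \<in> E\<close>] \<open>\<sigma> (h x) \<in> B (d, d')\<close> by blast
    ultimately show "\<exists>d'. (d, d') \<in> E \<and> (g \<circ> \<sigma> \<circ> h) x \<in> A (d, d')"
      by auto
  qed
  have iterate: "((g \<circ> \<sigma> \<circ> h) ^^ n) x = g ((\<sigma> ^^ n) (h x)) \<and> (\<sigma> ^^ n) (h x) \<in> M"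
    if "x \<in> K" for x n
    by (induction n) (use that h g(2) \<sigma>M in auto)
  fix x assume x: "x \<in> K"
  obtain q P where P: "P > 0" "(\<sigma> ^^ P) q = q" and conv: "(\<lambda>k. (\<sigma> ^^ (k * P)) (h x)) \<longlonglongrightarrow> q"
    using per[OF h(1)[OF x]] unfolding asymptotically_periodic_def by blast
  have "q \<in> M"
    using closed_sequentially[OF compact_imp_closed[OF \<open>compact M\<close>] _ conv] iterate[OF x] by blast
  have "((g \<circ> \<sigma> \<circ> h) ^^ P) (g q) = g q"
    using iterate[OF g(1)[OF \<open>q \<in> M\<close>], of P] g(2)[OF \<open>q \<in> M\<close>] P(2) by simp
  moreover have "(\<lambda>k. ((g \<circ> \<sigma> \<circ> h) ^^ (k * P)) x) \<longlonglongrightarrow> g q"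
    using continuous_on_tendsto_compose[OF g(3) conv \<open>q \<in> M\<close>] iterate[OF x] by simp
  ultimately show "asymptotically_periodic (g \<circ> \<sigma> \<circ> h) x"
    unfolding asymptotically_periodic_def using P(1) by blast
qed

theorem transition_graph_realisable:
  fixes K :: "'a::metric_space set" and E :: "(nat \<times> nat) set"
  assumes K: "cantor_set K" and V: "finite V" "E \<subseteq> V \<times> V"
    and out: "\<And>v. v \<in> V \<Longrightarrow> \<exists>w. (v, w) \<in> E" and inc: "\<And>w. w \<in> V \<Longrightarrow> \<exists>v. (v, w) \<in> E"
    and A: "edge_partition K E A"
  obtains T' S' where "homeomorphism K K T' S'" "respects_transitions E A T'"
    "\<And>x. x \<in> K \<Longrightarrow> periodic_orbit T' (omega_limit_set T' x)"
proof -
  obtain walk where walks: "walk_system E walk (fact (card V)) (card V + 1)"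
    using walk_system_exists[OF V out inc] by blast
  obtain Y :: "model_space set" and \<sigma> \<sigma>' B where Y: "compact Y" "countable Y"
    and \<sigma>: "homeomorphism Y Y \<sigma> \<sigma>'" and B: "edge_partition Y E B" "respects_transitions E B \<sigma>"
    and per: "\<And>y. y \<in> Y \<Longrightarrow> asymptotically_periodic \<sigma> y"
    by (rule walk_system.model_system_exists[OF walks]) blast
  have "E \<noteq> {}"
    using A cantor_setD(1)[OF K] unfolding edge_partition_def by auto
  then have "Y \<noteq> {}"
    using B(1) unfolding edge_partition_def by blast
  have K_nonempty: "K \<noteq> {}" and "compact K"
    using cantor_setD(1,2)[OF K] by auto
  have M: "cantor_set (Y \<times> K)" "edge_partition (Y \<times> K) E (\<lambda>e. B e \<times> K)"
    using cantor_set_Times[OF Y \<open>Y \<noteq> {}\<close> K] edge_partition_Times[OF B(1) \<open>compact K\<close> K_nonempty] by auto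
  obtain h g where hg: "homeomorphism K (Y \<times> K) h g"
    and matched: "\<And>p. p \<in> (\<lambda>e. (A e, B e \<times> K)) ` E \<Longrightarrow> h ` fst p = snd p"
    using cantor_sets_homeomorphic_matching[OF K M(1) matched_partition_of_edge_partitions[OF A M(2)]] by blast
  have hA: "h ` A e = B e \<times> K" if "e \<in> E" for e
    using matched[of "(A e, B e \<times> K)"] that by simp
  define \<tau> :: "model_space \<times> 'a \<Rightarrow> model_space \<times> 'a" where "\<tau> = (\<lambda>p. (\<sigma> (fst p), snd p))"
  have \<tau>: "homeomorphism (Y \<times> K) (Y \<times> K) \<tau> (\<lambda>p. (\<sigma>' (fst p), snd p))"
    "respects_transitions E (\<lambda>e. B e \<times> K) \<tau>" "\<And>p. p \<in> Y \<times> K \<Longrightarrow> asymptotically_periodic \<tau> p"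
    using homeomorphism_Times_id[OF \<sigma>] respects_transitions_Times[OF B(2)] asymptotically_periodic_Times[OF per]
    by (auto simp: \<tau>_def mem_Times_iff)
  note T' = conjugate_model_system[OF hg hA A \<tau> compact_Times[OF Y(1) \<open>compact K\<close>]]
  show ?thesis
  proof (rule that[OF T'(1,2)])
    fix x assume "x \<in> K"
    then show "periodic_orbit (g \<circ> \<tau> \<circ> h) (omega_limit_set (g \<circ> \<tau> \<circ> h) x)"
      using T'(1,3) compact_imp_closed[OF \<open>compact K\<close>]
      by (intro periodic_orbit_omega_limit_set[of K]) (auto simp: homeomorphism_def)
  qed
qed

definition transition_graph :: "('a \<Rightarrow> 'a) \<Rightarrow> ('i \<Rightarrow> 'a set) \<Rightarrow> 'i set \<Rightarrow> ('i \<times> 'i) set" where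
  "transition_graph T Ks I = {(c, d). c \<in> I \<and> d \<in> I \<and> (\<exists>x\<in>Ks c. T x \<in> Ks d)}"

definition transition_cell :: "('a \<Rightarrow> 'a) \<Rightarrow> ('i \<Rightarrow> 'a set) \<Rightarrow> 'i \<times> 'i \<Rightarrow> 'a set" where
  "transition_cell T Ks e = {x \<in> Ks (fst e). T x \<in> Ks (snd e)}"

locale cell_decomposition =
  fixes K :: "'a::metric_space set" and T :: "'a \<Rightarrow> 'a" and Ks :: "'i \<Rightarrow> 'a set" and I :: "'i set"
  assumes T: "\<exists>S. homeomorphism K K T S" and compact_K: "compact K" and finite_I: "finite I"
    and cells: "\<And>i. i \<in> I \<Longrightarrow> compact (Ks i) \<and> Ks i \<noteq> {}"
    and disjoint: "\<And>i j. i \<in> I \<Longrightarrow> j \<in> I \<Longrightarrow> i \<noteq> j \<Longrightarrow> Ks i \<inter> Ks j = {}"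
    and cover: "K = (\<Union>i\<in>I. Ks i)"
begin

lemma T_bij: "T ` K = K" "continuous_on K T"
  using T by (auto simp: homeomorphism_def)

lemma cell_of:
  assumes "x \<in> K"
  obtains i where "i \<in> I" "x \<in> Ks i"
  using assms cover by blast

lemma transition_graph_out: "c \<in> I \<Longrightarrow> \<exists>d. (c, d) \<in> transition_graph T Ks I"
proof -
  assume "c \<in> I"
  then obtain x where x: "x \<in> Ks c"
    using cells by blast
  then have "T x \<in> K"
    using \<open>c \<in> I\<close> cover T_bij(1) by blast
  then obtain d where "d \<in> I" "T x \<in> Ks d"
    by (rule cell_of)
  then show ?thesis
    using \<open>c \<in> I\<close> x by (auto simp: transition_graph_def)
qed

lemma transition_graph_in: "d \<in> I \<Longrightarrow> \<exists>c. (c, d) \<in> transition_graph T Ks I"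
proof -
  assume "d \<in> I"
  then obtain y where "y \<in> Ks d"
    using cells by blast
  then have "y \<in> T ` K"
    using \<open>d \<in> I\<close> cover T_bij(1) by blast
  then obtain x where "x \<in> K" "T x \<in> Ks d"
    using \<open>y \<in> Ks d\<close> by blast
  moreover obtain c where "c \<in> I" "x \<in> Ks c"
    using \<open>x \<in> K\<close> by (rule cell_of)
  ultimately show ?thesis
    using \<open>d \<in> I\<close> by (auto simp: transition_graph_def)
qed

lemma cell_unique: "i \<in> I \<Longrightarrow> j \<in> I \<Longrightarrow> x \<in> Ks i \<Longrightarrow> x \<in> Ks j \<Longrightarrow> i = j"
  using disjoint by blast

lemma transition_cells_disjoint:
  assumes "e \<in> transition_graph T Ks I" "e' \<in> transition_graph T Ks I" "e \<noteq> e'"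
  shows "transition_cell T Ks e \<inter> transition_cell T Ks e' = {}"
proof (rule ccontr)
  assume "transition_cell T Ks e \<inter> transition_cell T Ks e' \<noteq> {}"
  then obtain x where "x \<in> Ks (fst e)" "x \<in> Ks (fst e')" "T x \<in> Ks (snd e)" "T x \<in> Ks (snd e')"
    by (auto simp: transition_cell_def)
  then have "fst e = fst e'" "snd e = snd e'"
    using assms(1,2) cell_unique by (auto simp: transition_graph_def)
  then show False
    using assms(3) by (simp add: prod_eq_iff)
qed

lemma compact_transition_cell:
  assumes "e \<in> transition_graph T Ks I"
  shows "compact (transition_cell T Ks e)"
proof -
  have "closed (K \<inter> T -` Ks (snd e))"
    using assms cells compact_K by (intro continuous_closed_preimage T_bij(2) compact_imp_closed)
      (auto simp: transition_graph_def)
  moreover have "transition_cell T Ks e = Ks (fst e) \<inter> (K \<inter> T -` Ks (snd e))"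
    using assms cover by (auto simp: transition_graph_def transition_cell_def)
  ultimately show ?thesis
    using assms cells by (auto simp: transition_graph_def intro: compact_Int_closed)
qed

lemma transition_edge_partition: "edge_partition K (transition_graph T Ks I) (transition_cell T Ks)"
proof -
  have finite: "finite (transition_graph T Ks I)"
    using finite_I by (auto intro: finite_subset[of _ "I \<times> I"] simp: transition_graph_def)
  have cover_cells: "(\<Union>e\<in>transition_graph T Ks I. transition_cell T Ks e) = K"
  proof
    show "(\<Union>e\<in>transition_graph T Ks I. transition_cell T Ks e) \<subseteq> K"
      using cover by (auto simp: transition_graph_def transition_cell_def)
    show "K \<subseteq> (\<Union>e\<in>transition_graph T Ks I. transition_cell T Ks e)"
    proof
      fix x assume "x \<in> K"
      moreover obtain c where "c \<in> I" "x \<in> Ks c"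
        using \<open>x \<in> K\<close> by (rule cell_of)
      moreover have "T x \<in> K"
        using \<open>x \<in> K\<close> T_bij(1) by blast
      then obtain d where "d \<in> I" "T x \<in> Ks d"
        by (rule cell_of)
      ultimately show "x \<in> (\<Union>e\<in>transition_graph T Ks I. transition_cell T Ks e)"
        by (auto simp: transition_graph_def transition_cell_def)
    qed
  qed
  show ?thesis
    unfolding edge_partition_def
  proof (intro conjI ballI impI finite cover_cells transition_cells_disjoint)
    fix e assume "e \<in> transition_graph T Ks I"
    then show "transition_cell T Ks e \<noteq> {}"
      by (auto simp: transition_graph_def transition_cell_def)
    show "clopen_in K (transition_cell T Ks e)"
      using compact_transition_cell transition_cells_disjoint
      by (rule clopen_in_finite_partition[OF finite _ _ cover_cells[symmetric] \<open>e \<in> transition_graph T Ks I\<close>])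
  qed
qed

lemma same_cell_if_respects_transitions:
  assumes "respects_transitions (transition_graph T Ks I) (transition_cell T Ks) T'"
    and "x \<in> K" "i \<in> I"
  shows "T' x \<in> Ks i \<longleftrightarrow> T x \<in> Ks i"
proof -
  obtain c where "c \<in> I" "x \<in> Ks c"
    using assms(2) by (rule cell_of)
  moreover have "T x \<in> K"
    using assms(2) T_bij(1) by blast
  then obtain d where "d \<in> I" "T x \<in> Ks d"
    by (rule cell_of)
  ultimately have "(c, d) \<in> transition_graph T Ks I" "x \<in> transition_cell T Ks (c, d)"
    by (auto simp: transition_graph_def transition_cell_def)
  then obtain d' where "T' x \<in> transition_cell T Ks (d, d')"
    using assms(1) unfolding respects_transitions_def by blast
  then have "T' x \<in> Ks d"
    by (simp add: transition_cell_def)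
  then show ?thesis
    using \<open>T x \<in> Ks d\<close> \<open>d \<in> I\<close> assms(3) cell_unique by blast
qed

end

theorem theorem4p1:
  fixes K :: "'a::metric_space set" and T :: "'a \<Rightarrow> 'a"
    and Ks :: "nat \<Rightarrow> 'a set" and N :: nat
  assumes "cantor_set K"
    and "\<exists>S. homeomorphism K K T S"
    and "N \<ge> 1"
    and "\<forall>i\<in>{1..N}. cantor_set (Ks i)"
    and "\<forall>i\<in>{1..N}. \<forall>j\<in>{1..N}. i \<noteq> j \<longrightarrow> Ks i \<inter> Ks j = {}"
    and "K = (\<Union>i\<in>{1..N}. Ks i)"
  shows "\<exists>T'. (\<exists>S. homeomorphism K K T' S)
    \<and> (\<forall>x\<in>K. \<forall>i\<in>{1..N}. T' x \<in> Ks i \<longleftrightarrow> T x \<in> Ks i)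
    \<and> (\<forall>x\<in>K. periodic_orbit T' (omega_limit_set T' x))"
proof -
  interpret cell_decomposition K T Ks "{1..N}"
  proof
    show "compact (Ks i) \<and> Ks i \<noteq> {}" if "i \<in> {1..N}" for i
      using cantor_setD(1,2)[OF bspec[OF assms(4) that]] by simp
    show "Ks i \<inter> Ks j = {}" if "i \<in> {1..N}" "j \<in> {1..N}" "i \<noteq> j" for i j
      using assms(5) that by blast
  qed (use assms(2,6) cantor_setD(2)[OF assms(1)] in auto)
  have "transition_graph T Ks {1..N} \<subseteq> {1..N} \<times> {1..N}"
    by (auto simp: transition_graph_def)
  then obtain T' S' where "homeomorphism K K T' S'"
    and "respects_transitions (transition_graph T Ks {1..N}) (transition_cell T Ks) T'"
    and "\<And>x. x \<in> K \<Longrightarrow> periodic_orbit T' (omega_limit_set T' x)"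
    using transition_graph_realisable[OF assms(1) finite_atLeastAtMost[of 1 N] _ transition_graph_out
        transition_graph_in transition_edge_partition] by blast
  then show ?thesis
    using same_cell_if_respects_transitions by blast
qed

end
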